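(* Let $\mathcal{H}_A,\mathcal{H}_B,\mathcal{H}_C$ be finite-dimensional Hilbert spaces, with a fixed reference basis $\{|i\rangle_A\}$ of $\mathcal{H}_A$. For every pure state $|\psi\rangle_{ABC}\in\mathcal{H}_A\otimes\mathcal{H}_B\otimes\mathcal{H}_C$ with reduced states $\rho_{AB},\rho_{AC},\rho_B,\rho_C$, $$C^{A|B}_r(\rho_{AB})-C^{A|C}_r(\rho_{AC})=S(\rho_B)-S(\rho_C).$$
   Context: $S$ is the von Neumann entropy and $S(\rho\|\sigma)=\mathrm{Tr}\,\rho(\log\rho-\log\sigma)$ the relative entropy. A state on $\mathcal{H}_A$ is incoherent if it is diagonal in $\{|i\rangle_A\}$. The set $\mathcal{IQ}$ of incoherent-quantum states on $\mathcal{H}_A\otimes\mathcal{H}_X$ consists of states $\sum_kp_k\sigma^A_k\otimes\tau^X_k$ with each $\sigma^A_k$ incoherent and $\tau^X_k$ arbitrary states. The relative entropy of IQ coherence is $C^{A|X}_r(\rho_{AX})=\min_{\sigma\in\mathcal{IQ}}S(\rho_{AX}\|\sigma)$. *)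

theory Defs
  imports "HOL-Analysis.Analysis"
begin

text \<open>Finite-dimensional operators on C^n are represented as functions
  nat => nat => complex; only entries with indices below the dimension matter.\<close>

type_synonym cmat = "nat \<Rightarrow> nat \<Rightarrow> complex"
type_synonym cvec = "nat \<Rightarrow> complex"

definition mmult :: "nat \<Rightarrow> cmat \<Rightarrow> cmat \<Rightarrow> cmat" where
  "mmult n A B = (\<lambda>i j. \<Sum>k<n. A i k * B k j)"

definition mtrace :: "nat \<Rightarrow> cmat \<Rightarrow> complex" where
  "mtrace n A = (\<Sum>i<n. A i i)"

definition cinner :: "nat \<Rightarrow> cvec \<Rightarrow> cvec \<Rightarrow> complex" where
  "cinner n x y = (\<Sum>i<n. cnj (x i) * y i)"

definition hermitian_mat :: "nat \<Rightarrow> cmat \<Rightarrow> bool" where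
  "hermitian_mat n A \<longleftrightarrow> (\<forall>i<n. \<forall>j<n. A j i = cnj (A i j))"

definition psd_mat :: "nat \<Rightarrow> cmat \<Rightarrow> bool" where
  "psd_mat n A \<longleftrightarrow> hermitian_mat n A \<and>
     (\<forall>x::cvec. 0 \<le> Re (\<Sum>i<n. \<Sum>j<n. cnj (x i) * A i j * x j))"

definition density :: "nat \<Rightarrow> cmat \<Rightarrow> bool" where
  "density n \<rho> \<longleftrightarrow> psd_mat n \<rho> \<and> mtrace n \<rho> = 1"

definition orthonormal_family :: "nat \<Rightarrow> (nat \<Rightarrow> cvec) \<Rightarrow> bool" where
  "orthonormal_family n v \<longleftrightarrow>
     (\<forall>a<n. \<forall>b<n. cinner n (v a) (v b) = (if a = b then 1 else 0))"

definition spectral_decomp :: "nat \<Rightarrow> cmat \<Rightarrow> (nat \<Rightarrow> real) \<Rightarrow> (nat \<Rightarrow> cvec) \<Rightarrow> bool" where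
  "spectral_decomp n A lam v \<longleftrightarrow> orthonormal_family n v \<and>
     (\<forall>i<n. \<forall>j<n. A i j = (\<Sum>k<n. of_real (lam k) * v k i * cnj (v k j)))"

definition mat_fun :: "nat \<Rightarrow> (real \<Rightarrow> real) \<Rightarrow> cmat \<Rightarrow> cmat" where
  "mat_fun n f A = (let (lam, v) = (SOME (lam, v). spectral_decomp n A lam v)
     in (\<lambda>i j. \<Sum>k<n. of_real (f (lam k)) * v k i * cnj (v k j)))"

text \<open>Logarithm restricted to the support (log 0 := 0), and 0 log 0 = 0.\<close>
definition logs :: "real \<Rightarrow> real" where
  "logs x = (if x > 0 then ln x else 0)"

definition von_neumann_entropy :: "nat \<Rightarrow> cmat \<Rightarrow> real" where
  "von_neumann_entropy n \<rho> = - Re (mtrace n (mmult n \<rho> (mat_fun n logs \<rho>)))"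

definition supp_le :: "nat \<Rightarrow> cmat \<Rightarrow> cmat \<Rightarrow> bool" where
  "supp_le n \<rho> \<sigma> \<longleftrightarrow> (\<forall>x::cvec. (\<forall>i<n. (\<Sum>j<n. \<sigma> i j * x j) = 0) \<longrightarrow>
                                (\<forall>i<n. (\<Sum>j<n. \<rho> i j * x j) = 0))"

definition rel_entropy :: "nat \<Rightarrow> cmat \<Rightarrow> cmat \<Rightarrow> ereal" where
  "rel_entropy n \<rho> \<sigma> = (if supp_le n \<rho> \<sigma>
     then ereal (Re (mtrace n (mmult n \<rho> (\<lambda>i j. mat_fun n logs \<rho> i j - mat_fun n logs \<sigma> i j))))
     else \<infinity>)"

text \<open>Tensor product, index (i,x) of C^d1 (x) C^d2 is i*d2 + x.\<close>
definition kron :: "nat \<Rightarrow> cmat \<Rightarrow> cmat \<Rightarrow> cmat" where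
  "kron d2 A B = (\<lambda>r s. A (r div d2) (s div d2) * B (r mod d2) (s mod d2))"

definition incoherent :: "nat \<Rightarrow> cmat \<Rightarrow> bool" where
  "incoherent n \<sigma> \<longleftrightarrow> density n \<sigma> \<and> (\<forall>i<n. \<forall>j<n. i \<noteq> j \<longrightarrow> \<sigma> i j = 0)"

definition IQ :: "nat \<Rightarrow> nat \<Rightarrow> cmat set" where
  "IQ dA dX = {\<rho>. \<exists>(m::nat) (p::nat \<Rightarrow> real) \<sigma> \<tau>.
      (\<forall>k<m. 0 \<le> p k) \<and> (\<Sum>k<m. p k) = 1 \<and>
      (\<forall>k<m. incoherent dA (\<sigma> k) \<and> density dX (\<tau> k)) \<and>
      (\<forall>i<dA*dX. \<forall>j<dA*dX. \<rho> i j = (\<Sum>k<m. of_real (p k) * kron dX (\<sigma> k) (\<tau> k) i j))}"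

definition IQ_coherence :: "nat \<Rightarrow> nat \<Rightarrow> cmat \<Rightarrow> ereal" where
  "IQ_coherence dA dX \<rho> = (INF \<sigma>\<in>IQ dA dX. rel_entropy (dA*dX) \<rho> \<sigma>)"

definition ptrace_second :: "nat \<Rightarrow> cmat \<Rightarrow> cmat" where
  "ptrace_second d2 M = (\<lambda>i j. \<Sum>k<d2. M (i*d2 + k) (j*d2 + k))"

definition ptrace_first :: "nat \<Rightarrow> nat \<Rightarrow> cmat \<Rightarrow> cmat" where
  "ptrace_first d1 d2 M = (\<lambda>i j. \<Sum>k<d1. M (k*d2 + i) (k*d2 + j))"

text \<open>On C^dA (x) C^dB (x) C^dC (index (a*dB+b)*dC+c), trace out the middle factor.\<close>
definition ptrace_mid :: "nat \<Rightarrow> nat \<Rightarrow> cmat \<Rightarrow> cmat" where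
  "ptrace_mid dB dC M = (\<lambda>r s. \<Sum>b<dB.
      M ((r div dC * dB + b) * dC + r mod dC) ((s div dC * dB + b) * dC + s mod dC))"

definition proj :: "cvec \<Rightarrow> cmat" where
  "proj \<psi> = (\<lambda>i j. \<psi> i * cnj (\<psi> j))"

end

theory Submission
  imports Defs
begin

text \<open>
  For a density operator \<rho> on C^dA (x) C^dX, the dephased state \<Delta>(\<rho>), which keeps only the
  blocks diagonal in the reference basis of A, is itself incoherent-quantum, and
  S(\<rho> || \<sigma>) - S(\<rho> || \<Delta>(\<rho>)) = S(\<Delta>(\<rho>) || \<sigma>) \<ge> 0 for every incoherent-quantum \<sigma>
  because log \<sigma> is block diagonal as well (Klein's inequality). Hence
  C^{A|X}(\<rho>) = S(\<Delta>(\<rho>)) - S(\<rho>).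
  For a pure state on ABC, write \<psi> as a matrix M between AB and C: then \<rho>AB = M M^* and
  \<rho>C = M^T conj M have the same nonzero spectrum, so S(\<rho>AB) = S(\<rho>C); likewise
  S(\<rho>AC) = S(\<rho>B). Finally \<Delta>(\<rho>AB) and \<Delta>(\<rho>AC) are the two Gram matrices of one
  matrix (the state with A copied into a classical register), so they have equal entropies.
\<close>

lemma mult_cnj_self: "z * cnj z = (complex_of_real (cmod z))\<^sup>2"
  by (metis complex_norm_square of_real_power)

definition mat_vec :: "nat \<Rightarrow> cmat \<Rightarrow> cvec \<Rightarrow> cvec" where
  "mat_vec n A x = (\<lambda>i. \<Sum>j<n. A i j * x j)"

lemma cinner_sum_left:
  "cinner n (\<lambda>j. \<Sum>a\<in>K. c a * w a j) y = (\<Sum>a\<in>K. cnj (c a) * cinner n (w a) y)"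
  unfolding cinner_def
  by (simp add: sum_distrib_left sum_distrib_right mult.assoc sum.swap[of _ K])

lemma cinner_sum_right:
  "cinner n y (\<lambda>j. \<Sum>a\<in>K. c a * w a j) = (\<Sum>a\<in>K. c a * cinner n y (w a))"
  unfolding cinner_def
  by (simp add: sum_distrib_left sum_distrib_right mult.assoc mult.left_commute sum.swap[of _ K])

lemma cinner_add_left: "cinner n (\<lambda>j. x j + y j) z = cinner n x z + cinner n y z"
  unfolding cinner_def by (simp add: algebra_simps sum.distrib)

lemma cinner_add_right: "cinner n z (\<lambda>j. x j + y j) = cinner n z x + cinner n z y"
  unfolding cinner_def by (simp add: algebra_simps sum.distrib)

lemma cinner_diff_left: "cinner n (\<lambda>j. x j - y j) z = cinner n x z - cinner n y z"
  unfolding cinner_def by (simp add: algebra_simps sum_subtractf)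

lemma cinner_diff_right: "cinner n z (\<lambda>j. x j - y j) = cinner n z x - cinner n z y"
  unfolding cinner_def by (simp add: algebra_simps sum_subtractf)

lemma cinner_scale_left: "cinner n (\<lambda>j. c * x j) z = cnj c * cinner n x z"
  unfolding cinner_def by (simp add: algebra_simps sum_distrib_left)

lemma cinner_scale_right: "cinner n z (\<lambda>j. c * x j) = c * cinner n z x"
  unfolding cinner_def by (simp add: algebra_simps sum_distrib_left)

lemma cinner_cnj: "cnj (cinner n x y) = cinner n y x"
  unfolding cinner_def by (simp add: mult.commute)

lemma cinner_cong:
  "(\<And>i. i < n \<Longrightarrow> x i = x' i) \<Longrightarrow> (\<And>i. i < n \<Longrightarrow> y i = y' i) \<Longrightarrow>
    cinner n x y = cinner n x' y'"
  unfolding cinner_def by (rule sum.cong) auto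

lemma cinner_zero_right: "(\<And>i. i < n \<Longrightarrow> z i = 0) \<Longrightarrow> cinner n y z = 0"
  unfolding cinner_def by (rule sum.neutral) auto

lemma cinner_self: "cinner n x x = of_real (\<Sum>i<n. (cmod (x i))\<^sup>2)"
  unfolding cinner_def of_real_sum
  by (rule sum.cong) (simp_all add: mult_cnj_self mult.commute)

lemma cinner_self_real: "cinner n z z = of_real (Re (cinner n z z))"
  by (simp add: cinner_self)

lemma cinner_self_ge0: "0 \<le> Re (cinner n z z)"
  by (simp add: cinner_self sum_nonneg)

lemma cinner_self_eq_0D:
  assumes "cinner n x x = 0" "i < n" shows "x i = 0"
proof -
  have "(\<Sum>i<n. (cmod (x i))\<^sup>2) = 0"
    using assms(1) by (simp only: cinner_self of_real_eq_0_iff)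
  then have "\<forall>i\<in>{..<n}. (cmod (x i))\<^sup>2 = 0" by (subst sum_nonneg_eq_0_iff[symmetric]) auto
  then show ?thesis using assms(2) by auto
qed

lemma cinner_self_Re_eq_0D: "Re (cinner n z z) = 0 \<Longrightarrow> i < n \<Longrightarrow> z i = 0"
  by (metis cinner_self_eq_0D cinner_self_real of_real_0)

lemma cinner_basis_left:
  assumes "i < n" shows "cinner n (\<lambda>j. if j = i then 1 else 0) y = y i"
proof -
  have "cinner n (\<lambda>j. if j = i then 1 else 0) y = (\<Sum>j<n. if j = i then y j else 0)"
    unfolding cinner_def by (rule sum.cong) auto
  then show ?thesis using assms by (simp add: sum.delta)
qed

lemma cinner_basis_right:
  assumes "i < n" shows "cinner n y (\<lambda>j. if j = i then 1 else 0) = cnj (y i)"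
proof -
  have "cinner n y (\<lambda>j. if j = i then 1 else 0) = (\<Sum>j<n. if j = i then cnj (y j) else 0)"
    unfolding cinner_def by (rule sum.cong) auto
  then show ?thesis using assms by (simp add: sum.delta)
qed

lemma mat_vec_add: "mat_vec n A (\<lambda>j. x j + y j) = (\<lambda>i. mat_vec n A x i + mat_vec n A y i)"
  unfolding mat_vec_def by (simp add: algebra_simps sum.distrib)

lemma mat_vec_scale: "mat_vec n A (\<lambda>j. c * x j) = (\<lambda>i. c * mat_vec n A x i)"
  unfolding mat_vec_def by (simp add: algebra_simps sum_distrib_left)

lemma mat_vec_sum: "mat_vec n B (\<lambda>i. \<Sum>a\<in>A. f a i) r = (\<Sum>a\<in>A. mat_vec n B (f a) r)"
  unfolding mat_vec_def sum_distrib_left by (rule sum.swap)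

lemma mat_vec_cong: "(\<And>i. i < n \<Longrightarrow> x i = x' i) \<Longrightarrow> mat_vec n A x = mat_vec n A x'"
  unfolding mat_vec_def by (rule ext, rule sum.cong) auto

lemma cinner_mat_vec: "cinner n x (mat_vec n A x) = (\<Sum>i<n. \<Sum>j<n. cnj (x i) * A i j * x j)"
  unfolding cinner_def mat_vec_def by (simp add: sum_distrib_left mult.assoc)

lemma hermitian_matD: "hermitian_mat n A \<Longrightarrow> i < n \<Longrightarrow> j < n \<Longrightarrow> A j i = cnj (A i j)"
  unfolding hermitian_mat_def by blast

lemma psd_matD: "psd_mat n A \<Longrightarrow> 0 \<le> Re (\<Sum>i<n. \<Sum>j<n. cnj (x i) * A i j * x j)"
  unfolding psd_mat_def by blast

lemma psd_mat_cinner_nonneg: "psd_mat n A \<Longrightarrow> 0 \<le> Re (cinner n x (mat_vec n A x))"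
  unfolding cinner_mat_vec by (rule psd_matD)

lemma density_hermitian: "density n A \<Longrightarrow> hermitian_mat n A"
  unfolding density_def psd_mat_def by blast

lemma hermitian_cinner_adjoint:
  assumes "hermitian_mat n A"
  shows "cinner n x (mat_vec n A y) = cinner n (mat_vec n A x) y"
proof -
  have "cinner n x (mat_vec n A y) = (\<Sum>i<n. \<Sum>j<n. cnj (x i) * A i j * y j)"
    unfolding cinner_def mat_vec_def by (simp add: sum_distrib_left mult.assoc)
  also have "\<dots> = (\<Sum>j<n. \<Sum>i<n. cnj (x i) * A i j * y j)" by (rule sum.swap)
  also have "\<dots> = (\<Sum>j<n. (\<Sum>i<n. cnj (A j i) * cnj (x i)) * y j)"
    unfolding sum_distrib_right
  proof (intro sum.cong refl)
    fix i j assume "j \<in> {..<n}" "i \<in> {..<n}"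
    then have "A j i = cnj (A i j)" by (intro hermitian_matD[OF assms]) auto
    then show "cnj (x i) * A i j * y j = cnj (A j i) * cnj (x i) * y j" by simp
  qed
  also have "\<dots> = cinner n (mat_vec n A x) y"
    unfolding cinner_def mat_vec_def by simp
  finally show ?thesis .
qed

lemma sum_swap3:
  "(\<Sum>j\<in>A. \<Sum>i\<in>B. \<Sum>c\<in>C. f j i c) = (\<Sum>c\<in>C. \<Sum>i\<in>B. \<Sum>j\<in>A. f j i c)"
proof -
  have "(\<Sum>j\<in>A. \<Sum>i\<in>B. \<Sum>c\<in>C. f j i c) = (\<Sum>c\<in>C. \<Sum>j\<in>A. \<Sum>i\<in>B. f j i c)"
    by (subst sum.swap) (rule sum.swap)
  also have "\<dots> = (\<Sum>c\<in>C. \<Sum>i\<in>B. \<Sum>j\<in>A. f j i c)"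
    by (rule sum.cong[OF refl], rule sum.swap)
  finally show ?thesis .
qed

definition ortho_residual :: "nat \<Rightarrow> (nat \<Rightarrow> cvec) \<Rightarrow> nat \<Rightarrow> cvec" where
  "ortho_residual k u i = (\<lambda>j. (if j = i then 1 else 0) - (\<Sum>a<k. cnj (u a i) * u a j))"

context
  fixes n k :: nat and u :: "nat \<Rightarrow> cvec"
  assumes orth: "\<And>a b. a < k \<Longrightarrow> b < k \<Longrightarrow> cinner n (u a) (u b) = (if a = b then 1 else 0)"
begin

lemma cinner_ortho_residual:
  assumes "b < k" "i < n"
  shows "cinner n (u b) (ortho_residual k u i) = 0"
proof -
  have "cinner n (u b) (ortho_residual k u i) = cnj (u b i) - (\<Sum>a<k. cnj (u a i) * cinner n (u b) (u a))"
    unfolding ortho_residual_def cinner_diff_right cinner_sum_right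
    using assms by (simp add: cinner_basis_right)
  also have "(\<Sum>a<k. cnj (u a i) * cinner n (u b) (u a)) = (\<Sum>a<k. if a = b then cnj (u a i) else 0)"
    by (rule sum.cong) (use assms in \<open>auto simp: orth\<close>)
  also have "\<dots> = cnj (u b i)" using assms by (simp add: sum.delta')
  finally show ?thesis by simp
qed

lemma cinner_ortho_residual_self:
  assumes i: "i < n"
  shows "cinner n (ortho_residual k u i) (ortho_residual k u i) = 1 - (\<Sum>a<k. of_real ((cmod (u a i))\<^sup>2))"
proof -
  let ?e = "\<lambda>j. if j = i then 1 else (0::complex)"
  let ?p = "\<lambda>j. \<Sum>a<k. cnj (u a i) * u a j"
  have pp: "cinner n ?p ?p = (\<Sum>a<k. u a i * cnj (u a i))"
  proof -
    have "cinner n ?p ?p = (\<Sum>a<k. u a i * (\<Sum>b<k. cnj (u b i) * cinner n (u a) (u b)))"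
      by (simp add: cinner_sum_left cinner_sum_right)
    also have "\<dots> = (\<Sum>a<k. u a i * cnj (u a i))"
    proof (rule sum.cong[OF refl])
      fix a assume a: "a \<in> {..<k}"
      have "(\<Sum>b<k. cnj (u b i) * cinner n (u a) (u b)) = (\<Sum>b<k. if b = a then cnj (u b i) else 0)"
        by (rule sum.cong) (use a in \<open>auto simp: orth\<close>)
      then show "u a i * (\<Sum>b<k. cnj (u b i) * cinner n (u a) (u b)) = u a i * cnj (u a i)"
        using a by (simp add: sum.delta')
    qed
    finally show ?thesis .
  qed
  have "cinner n (ortho_residual k u i) (ortho_residual k u i) = 1 - (\<Sum>a<k. u a i * cnj (u a i))"
    unfolding ortho_residual_def cinner_diff_left cinner_diff_right pp
    using i by (simp add: cinner_basis_left cinner_basis_right cinner_sum_left cinner_sum_right mult.commute)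
  then show ?thesis by (simp add: mult_cnj_self)
qed

lemma sum_cinner_ortho_residual_self:
  "(\<Sum>i<n. cinner n (ortho_residual k u i) (ortho_residual k u i)) = of_nat n - of_nat k"
proof -
  have "(\<Sum>i<n. cinner n (ortho_residual k u i) (ortho_residual k u i))
      = (\<Sum>i<n. 1 - (\<Sum>a<k. of_real ((cmod (u a i))\<^sup>2)))"
    by (rule sum.cong) (auto simp: cinner_ortho_residual_self)
  also have "\<dots> = of_nat n - (\<Sum>i<n. \<Sum>a<k. of_real ((cmod (u a i))\<^sup>2))"
    by (simp only: sum_subtractf) simp
  also have "\<dots> = of_nat n - (\<Sum>a<k. \<Sum>i<n. of_real ((cmod (u a i))\<^sup>2))"
    by (subst sum.swap) (rule refl)
  also have "\<dots> = of_nat n - (\<Sum>a<k. cinner n (u a) (u a))"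
    by (simp add: cinner_self)
  also have "\<dots> = of_nat n - of_nat k" by (simp add: orth)
  finally show ?thesis .
qed

lemma exists_orthogonal_nonzero:
  assumes "k < n"
  shows "\<exists>y. (\<forall>a<k. cinner n (u a) y = 0) \<and> cinner n y y \<noteq> 0"
proof -
  have "(\<Sum>i<n. cinner n (ortho_residual k u i) (ortho_residual k u i)) \<noteq> 0"
    using assms by (simp add: sum_cinner_ortho_residual_self)
  then obtain i where "i < n" "cinner n (ortho_residual k u i) (ortho_residual k u i) \<noteq> 0"
    by (meson lessThan_iff sum.neutral)
  then show ?thesis using cinner_ortho_residual[OF _ \<open>i < n\<close>] by auto
qed

end

lemma orthonormal_family_complete:
  assumes on: "orthonormal_family n u" and i: "i < n" and j: "j < n"
  shows "(\<Sum>a<n. u a i * cnj (u a j)) = (if i = j then 1 else 0)"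
proof -
  have orth: "\<And>a b. a < n \<Longrightarrow> b < n \<Longrightarrow> cinner n (u a) (u b) = (if a = b then 1 else 0)"
    using on unfolding orthonormal_family_def by auto
  have "Re (\<Sum>i<n. cinner n (ortho_residual n u i) (ortho_residual n u i)) = 0"
    by (simp only: sum_cinner_ortho_residual_self[OF orth]) simp
  then have "(\<Sum>i<n. Re (cinner n (ortho_residual n u i) (ortho_residual n u i))) = 0"
    by (simp only: Re_sum)
  then have "\<forall>i\<in>{..<n}. Re (cinner n (ortho_residual n u i) (ortho_residual n u i)) = 0"
    by (subst sum_nonneg_eq_0_iff[symmetric]) (auto simp: cinner_self_ge0)
  then have "ortho_residual n u i j = 0" using i j by (intro cinner_self_Re_eq_0D) auto
  then have "cnj (\<Sum>a<n. cnj (u a i) * u a j) = cnj (if j = i then 1 else 0)"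
    unfolding ortho_residual_def by simp
  then show ?thesis by (auto simp: mult.commute)
qed

lemma orthonormal_family_parseval:
  assumes on: "orthonormal_family n w"
  shows "(\<Sum>l<n. (cmod (cinner n (w l) x))\<^sup>2) = Re (cinner n x x)"
proof -
  have "(\<Sum>l<n. complex_of_real ((cmod (cinner n (w l) x))\<^sup>2)) = (\<Sum>l<n. cinner n x (w l) * cinner n (w l) x)"
    by (rule sum.cong[OF refl]) (simp add: mult_cnj_self mult.commute flip: cinner_cnj[of n "w _" x])
  also have "\<dots> = (\<Sum>l<n. \<Sum>j<n. \<Sum>i<n. cnj (x i) * x j * (w l i * cnj (w l j)))"
    unfolding cinner_def sum_distrib_left sum_distrib_right
    by (intro sum.cong refl) (simp add: mult_ac)
  also have "\<dots> = (\<Sum>j<n. \<Sum>i<n. cnj (x i) * x j * (\<Sum>l<n. w l i * cnj (w l j)))"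
    unfolding sum_distrib_left by (subst sum.swap, rule sum.cong[OF refl], subst sum.swap, rule refl)
  also have "\<dots> = (\<Sum>j<n. \<Sum>i<n. if i = j then cnj (x i) * x j else 0)"
    by (intro sum.cong refl) (simp add: orthonormal_family_complete[OF on])
  also have "\<dots> = cinner n x x" by (simp add: cinner_def sum.delta')
  finally show ?thesis by (metis Re_complex_of_real of_real_sum)
qed

lemma orthonormal_family_expand:
  assumes on: "orthonormal_family n w" and i: "i < n"
  shows "x i = (\<Sum>l<n. cinner n (w l) x * w l i)"
proof -
  have "(\<Sum>l<n. cinner n (w l) x * w l i) = (\<Sum>l<n. \<Sum>j<n. x j * (w l i * cnj (w l j)))"
    unfolding cinner_def sum_distrib_right by (intro sum.cong refl) (simp add: mult_ac)
  also have "\<dots> = (\<Sum>j<n. x j * (\<Sum>l<n. w l i * cnj (w l j)))"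
    unfolding sum_distrib_left by (rule sum.swap)
  also have "\<dots> = (\<Sum>j<n. if j = i then x j else 0)"
    by (rule sum.cong[OF refl]) (auto simp: orthonormal_family_complete[OF on i])
  also have "\<dots> = x i" using i by (simp add: sum.delta')
  finally show ?thesis by simp
qed

section \<open>The spectral theorem\<close>

text \<open>
  Eigenvectors are obtained one at a time by maximising the Rayleigh quotient on the
  orthogonal complement of those already found; vectors are functions nat \<Rightarrow> complex, so the
  unit sphere is searched inside a compact box of the product topology.
\<close>

lemma compact_PiE_unit_cballs: "compact (PiE UNIV (\<lambda>i::nat. if i < n then cball (0::complex) 1 else {0}))"
proof -
  have "compactin (product_topology (\<lambda>_. euclidean) UNIV)
     (PiE UNIV (\<lambda>i::nat. if i < n then cball (0::complex) 1 else {0}))"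
    by (subst compactin_PiE) auto
  then show ?thesis by (simp add: euclidean_product_topology)
qed

lemma continuous_on_cinner_right: "continuous_on UNIV (\<lambda>z. cinner n y z)"
  unfolding cinner_def by (intro continuous_intros continuous_on_product_coordinates)

lemma continuous_on_cinner_self: "continuous_on UNIV (\<lambda>z. cinner n z z)"
  unfolding cinner_def by (intro continuous_intros continuous_on_product_coordinates)

lemma continuous_on_Re_cinner_mat_vec: "continuous_on UNIV (\<lambda>z. Re (cinner n z (mat_vec n A z)))"
  unfolding cinner_def mat_vec_def by (intro continuous_intros continuous_on_product_coordinates)

lemma compact_orthogonal_unit_vectors:
  "compact (PiE UNIV (\<lambda>i::nat. if i < n then cball (0::complex) 1 else {0})
     \<inter> {z. (\<forall>a<k. cinner n (u a) z = 0) \<and> cinner n z z = 1})"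
proof (rule compact_Int_closed[OF compact_PiE_unit_cballs])
  have "closed {z. a < k \<longrightarrow> cinner n (u a) z = 0}" for a
    by (cases "a < k") (simp_all add: closed_Collect_eq[OF continuous_on_cinner_right continuous_on_const])
  then show "closed {z. (\<forall>a<k. cinner n (u a) z = 0) \<and> cinner n z z = 1}"
    by (intro closed_Collect_conj closed_Collect_all)
       (simp_all add: closed_Collect_eq[OF continuous_on_cinner_self continuous_on_const])
qed

lemma normalized_vector:
  assumes "0 < Re (cinner n z z)"
  defines "c \<equiv> 1 / sqrt (Re (cinner n z z))"
  defines "z' \<equiv> (\<lambda>i. if i < n then of_real c * z i else 0)"
  shows "cinner n z' z' = 1" "\<And>y. cinner n y z' = of_real c * cinner n y z"
    "\<And>A. cinner n z' (mat_vec n A z') = of_real (c\<^sup>2) * cinner n z (mat_vec n A z)"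
    "z' \<in> PiE UNIV (\<lambda>i. if i < n then cball 0 1 else {0})"
proof -
  have eqz: "\<And>i. i < n \<Longrightarrow> z' i = of_real c * z i" by (simp add: z'_def)
  show y: "\<And>y. cinner n y z' = of_real c * cinner n y z"
    by (subst cinner_cong[of n y y z' "\<lambda>j. of_real c * z j"]) (simp_all add: eqz cinner_scale_right)
  have l: "\<And>y. cinner n z' y = of_real c * cinner n z y"
    by (subst cinner_cong[of n z' "\<lambda>j. of_real c * z j" y y]) (simp_all add: eqz cinner_scale_left)
  have mvz: "\<And>A. mat_vec n A z' = (\<lambda>i. of_real c * mat_vec n A z i)"
    by (subst mat_vec_cong[of n z' "\<lambda>j. of_real c * z j"]) (simp_all add: eqz mat_vec_scale)
  show "\<And>A. cinner n z' (mat_vec n A z') = of_real (c\<^sup>2) * cinner n z (mat_vec n A z)"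
    by (simp add: mvz l cinner_scale_right power2_eq_square)
  show one: "cinner n z' z' = 1"
    apply (simp add: l y)
    apply (subst cinner_self_real)
    using assms(1) by (simp add: c_def power2_eq_square flip: of_real_mult)
  have "cmod (z' i) \<le> 1" if "i < n" for i
  proof -
    have "(cmod (z' i))\<^sup>2 \<le> (\<Sum>j<n. (cmod (z' j))\<^sup>2)"
      by (rule member_le_sum) (use that in auto)
    also have "\<dots> = 1"
      using one by (simp only: cinner_self of_real_eq_1_iff)
    finally show ?thesis by (simp add: power_le_one_iff abs_le_square_iff)
  qed
  then show "z' \<in> PiE UNIV (\<lambda>i. if i < n then cball 0 1 else {0})"
    by (auto simp: PiE_UNIV_domain z'_def dist_norm)
qed

lemma hermitian_rayleigh_perturbation:
  fixes t :: real
  assumes herm: "hermitian_mat n A" and xx: "cinner n x x = 1"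
  defines "\<mu> \<equiv> Re (cinner n x (mat_vec n A x))"
  defines "w \<equiv> (\<lambda>i. mat_vec n A x i - of_real \<mu> * x i)"
  defines "z \<equiv> (\<lambda>i. x i + of_real t * w i)"
  shows "Re (cinner n z (mat_vec n A z)) - \<mu> * Re (cinner n z z)
     = 2 * t * Re (cinner n w w) + t\<^sup>2 * (Re (cinner n w (mat_vec n A w)) - \<mu> * Re (cinner n w w))"
proof -
  have mvx: "mat_vec n A x = (\<lambda>i. w i + of_real \<mu> * x i)" by (simp add: w_def)
  have e1: "cinner n x (mat_vec n A w) = cinner n w w + of_real \<mu> * cinner n x w"
    by (simp add: hermitian_cinner_adjoint[OF herm] mvx cinner_add_left cinner_scale_left)
  have e2: "cinner n w (mat_vec n A x) = cinner n w w + of_real \<mu> * cinner n w x"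
    by (simp add: mvx cinner_add_right cinner_scale_right)
  have "cinner n z (mat_vec n A z) - of_real \<mu> * cinner n z z
    = (cinner n x (mat_vec n A x) - of_real \<mu> * cinner n x x)
      + of_real t * (cinner n x (mat_vec n A w) - of_real \<mu> * cinner n x w)
      + of_real t * (cinner n w (mat_vec n A x) - of_real \<mu> * cinner n w x)
      + of_real (t\<^sup>2) * (cinner n w (mat_vec n A w) - of_real \<mu> * cinner n w w)"
    unfolding z_def mat_vec_add mat_vec_scale cinner_add_left cinner_add_right
      cinner_scale_left cinner_scale_right
    by (simp add: algebra_simps power2_eq_square)
  also have "\<dots> = (cinner n x (mat_vec n A x) - of_real \<mu>)
      + of_real (2 * t) * cinner n w w
      + of_real (t\<^sup>2) * (cinner n w (mat_vec n A w) - of_real \<mu> * cinner n w w)"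
    by (simp add: e1 e2 xx algebra_simps)
  finally have "Re (cinner n z (mat_vec n A z) - of_real \<mu> * cinner n z z)
      = Re ((cinner n x (mat_vec n A x) - of_real \<mu>) + of_real (2 * t) * cinner n w w
          + of_real (t\<^sup>2) * (cinner n w (mat_vec n A w) - of_real \<mu> * cinner n w w))"
    by (rule arg_cong)
  then show ?thesis by (simp add: \<mu>_def algebra_simps)
qed

lemma nonneg_eq_0_if_quadratic_le_0:
  fixes W d :: real
  assumes W0: "0 \<le> W" and le: "\<And>t. 0 < t \<Longrightarrow> 2 * t * W + t\<^sup>2 * d \<le> 0"
  shows "W = 0"
proof (rule ccontr)
  assume "W \<noteq> 0"
  then have Wp: "W > 0" using W0 by linarith
  define t where "t = W / (\<bar>d\<bar> + 1)"
  have tp: "t > 0" unfolding t_def using Wp by (simp add: add_pos_nonneg)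
  have "t * \<bar>d\<bar> \<le> W" unfolding t_def using Wp by (simp add: field_simps mult_left_mono)
  then have "t\<^sup>2 * \<bar>d\<bar> \<le> t * W" using tp by (simp add: power2_eq_square mult.assoc mult_left_mono)
  moreover have "t\<^sup>2 * (- \<bar>d\<bar>) \<le> t\<^sup>2 * d" by (rule mult_left_mono) auto
  moreover have "0 < t * W" using tp Wp by simp
  ultimately have "0 < 2 * t * W + t\<^sup>2 * d" by linarith
  then show False using le[OF tp] by linarith
qed

context
  fixes n k :: nat and u :: "nat \<Rightarrow> cvec"
  assumes orth: "\<And>a b. a < k \<Longrightarrow> b < k \<Longrightarrow> cinner n (u a) (u b) = (if a = b then 1 else 0)"
begin

lemma rayleigh_maximizer_exists:
  assumes "k < n"
  shows "\<exists>x. (\<forall>a<k. cinner n (u a) x = 0) \<and> cinner n x x = 1 \<and>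
    (\<forall>z. (\<forall>a<k. cinner n (u a) z = 0) \<longrightarrow>
       Re (cinner n z (mat_vec n A z)) \<le> Re (cinner n x (mat_vec n A x)) * Re (cinner n z z))"
proof -
  define S where "S = PiE UNIV (\<lambda>i::nat. if i < n then cball (0::complex) 1 else {0})
     \<inter> {z. (\<forall>a<k. cinner n (u a) z = 0) \<and> cinner n z z = 1}"
  have normalized_in_S:
    "(\<lambda>i. if i < n then of_real (1 / sqrt (Re (cinner n z z))) * z i else 0) \<in> S"
    if "\<forall>a<k. cinner n (u a) z = 0" "0 < Re (cinner n z z)" for z
    using normalized_vector[OF that(2)] that(1) unfolding S_def by auto
  obtain y where y: "\<forall>a<k. cinner n (u a) y = 0" "cinner n y y \<noteq> 0"
    using exists_orthogonal_nonzero[OF orth assms] by blast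
  then have "0 < Re (cinner n y y)"
    using cinner_self_ge0[of n y] cinner_self_real[of n y] by (metis less_eq_real_def of_real_0)
  then have "S \<noteq> {}" using normalized_in_S[OF y(1)] by blast
  then obtain x where "x \<in> S"
    and xmax: "\<And>z. z \<in> S \<Longrightarrow> Re (cinner n z (mat_vec n A z)) \<le> Re (cinner n x (mat_vec n A x))"
    using continuous_attains_sup[OF compact_orthogonal_unit_vectors[of n k u, folded S_def] _
        continuous_on_subset[OF continuous_on_Re_cinner_mat_vec subset_UNIV]]
    by blast
  moreover have "Re (cinner n z (mat_vec n A z)) \<le> Re (cinner n x (mat_vec n A x)) * Re (cinner n z z)"
    if z: "\<forall>a<k. cinner n (u a) z = 0" for z
  proof (cases "Re (cinner n z z) = 0")
    case True
    then have "\<And>i. i < n \<Longrightarrow> z i = 0" using cinner_self_Re_eq_0D by blast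
    then have "cinner n z (mat_vec n A z) = 0" by (simp add: cinner_def)
    then show ?thesis using True by simp
  next
    case False
    then have pos: "0 < Re (cinner n z z)" using cinner_self_ge0[of n z] by linarith
    define c where "c = 1 / sqrt (Re (cinner n z z))"
    have "c\<^sup>2 * Re (cinner n z (mat_vec n A z)) \<le> Re (cinner n x (mat_vec n A x))"
      using xmax[OF normalized_in_S[OF z pos]] normalized_vector(3)[OF pos] by (simp add: c_def)
    moreover have "c\<^sup>2 = 1 / Re (cinner n z z)" using pos by (simp add: c_def power_divide)
    ultimately show ?thesis using pos by (simp add: field_simps)
  qed
  ultimately show ?thesis unfolding S_def by blast
qed

lemma hermitian_orthogonal_eigenvector_exists:
  assumes herm: "hermitian_mat n A"
    and eig: "\<And>a i. a < k \<Longrightarrow> i < n \<Longrightarrow> mat_vec n A (u a) i = of_real (lam a) * u a i"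
    and k: "k < n"
  shows "\<exists>x \<mu>. (\<forall>a<k. cinner n (u a) x = 0) \<and> cinner n x x = 1 \<and>
    (\<forall>i<n. mat_vec n A x i = of_real \<mu> * x i)"
proof -
  define V where "V z \<longleftrightarrow> (\<forall>a<k. cinner n (u a) z = 0)" for z
  have invariant: "V (mat_vec n A z)" if "V z" for z
    unfolding V_def
  proof (intro allI impI)
    fix a assume a: "a < k"
    have "cinner n (u a) (mat_vec n A z) = cinner n (mat_vec n A (u a)) z"
      by (rule hermitian_cinner_adjoint[OF herm])
    also have "\<dots> = cinner n (\<lambda>i. of_real (lam a) * u a i) z"
      by (rule cinner_cong) (simp_all add: eig a)
    also have "\<dots> = 0" using that a by (simp add: V_def cinner_scale_left)
    finally show "cinner n (u a) (mat_vec n A z) = 0" .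
  qed
  obtain x where Vx: "V x" and xx: "cinner n x x = 1"
    and max: "\<And>z. V z \<Longrightarrow> Re (cinner n z (mat_vec n A z)) \<le> Re (cinner n x (mat_vec n A x)) * Re (cinner n z z)"
    using rayleigh_maximizer_exists[OF k, of A] unfolding V_def by blast
  define \<mu> where "\<mu> = Re (cinner n x (mat_vec n A x))"
  define w where "w = (\<lambda>i. mat_vec n A x i - of_real \<mu> * x i)"
  have Vw: "V w"
    using invariant[OF Vx] Vx unfolding V_def w_def by (simp add: cinner_diff_right cinner_scale_right)
  have "Re (cinner n w w) = 0"
  proof (rule nonneg_eq_0_if_quadratic_le_0[OF cinner_self_ge0])
    fix t :: real
    have Vz: "V (\<lambda>i. x i + of_real t * w i)"
      using Vx Vw unfolding V_def by (simp add: cinner_add_right cinner_scale_right)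
    have "Re (cinner n (\<lambda>i. x i + of_real t * w i) (mat_vec n A (\<lambda>i. x i + of_real t * w i)))
        - \<mu> * Re (cinner n (\<lambda>i. x i + of_real t * w i) (\<lambda>i. x i + of_real t * w i)) \<le> 0"
      using max[OF Vz] unfolding \<mu>_def by simp
    then show "2 * t * Re (cinner n w w) + t\<^sup>2 * (Re (cinner n w (mat_vec n A w)) - \<mu> * Re (cinner n w w)) \<le> 0"
      using hermitian_rayleigh_perturbation[OF herm xx, of t] unfolding \<mu>_def w_def by simp
  qed
  then have "\<forall>i<n. mat_vec n A x i = of_real \<mu> * x i"
    using cinner_self_Re_eq_0D unfolding w_def by fastforce
  then show ?thesis using Vx xx unfolding V_def by blast
qed

end

lemma hermitian_orthonormal_eigenvectors_exist:
  assumes herm: "hermitian_mat n A" and "k \<le> n"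
  shows "\<exists>u lam. (\<forall>a b. a < k \<longrightarrow> b < k \<longrightarrow> cinner n (u a) (u b) = (if a = b then 1 else 0))
     \<and> (\<forall>a i. a < k \<longrightarrow> i < n \<longrightarrow> mat_vec n A (u a) i = of_real (lam a) * u a i)"
  using assms(2)
proof (induction k)
  case 0
  then show ?case by auto
next
  case (Suc k)
  then obtain u lam where orth: "\<forall>a b. a < k \<longrightarrow> b < k \<longrightarrow> cinner n (u a) (u b) = (if a = b then 1 else 0)"
    and eig: "\<forall>a i. a < k \<longrightarrow> i < n \<longrightarrow> mat_vec n A (u a) i = of_real (lam a) * u a i" by auto
  obtain x \<mu> where x: "\<forall>a<k. cinner n (u a) x = 0" "cinner n x x = 1" "\<forall>i<n. mat_vec n A x i = of_real \<mu> * x i"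
    using hermitian_orthogonal_eigenvector_exists[OF _ herm, of k u lam] orth eig Suc.prems by auto
  have x': "\<forall>a<k. cinner n x (u a) = 0" using x(1) cinner_cnj by (metis complex_cnj_zero)
  show ?case
    apply (rule exI[of _ "u(k := x)"], rule exI[of _ "lam(k := \<mu>)"])
    using orth eig x x' by (auto simp: less_Suc_eq)
qed

lemma spectral_decomp_exists:
  assumes herm: "hermitian_mat n A"
  shows "\<exists>lam v. spectral_decomp n A lam v"
proof -
  obtain u lam where orth: "\<forall>a b. a < n \<longrightarrow> b < n \<longrightarrow> cinner n (u a) (u b) = (if a = b then 1 else 0)"
    and eig: "\<forall>a i. a < n \<longrightarrow> i < n \<longrightarrow> mat_vec n A (u a) i = of_real (lam a) * u a i"
    using hermitian_orthonormal_eigenvectors_exist[OF herm order_refl] by blast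
  have on: "orthonormal_family n u" using orth by (simp add: orthonormal_family_def)
  have "A i j = (\<Sum>k<n. of_real (lam k) * u k i * cnj (u k j))" if "i < n" "j < n" for i j
  proof -
    have "(\<Sum>l<n. A i l * (if l = j then 1 else 0)) = (\<Sum>l<n. if l = j then A i l else 0)"
      by (rule sum.cong) auto
    then have "A i j = (\<Sum>l<n. A i l * (if l = j then 1 else 0))" using that(2) by (simp add: sum.delta')
    also have "\<dots> = (\<Sum>l<n. A i l * (\<Sum>k<n. u k l * cnj (u k j)))"
      by (rule sum.cong) (auto simp: orthonormal_family_complete[OF on _ that(2)])
    also have "\<dots> = (\<Sum>k<n. (\<Sum>l<n. A i l * u k l) * cnj (u k j))"
      by (simp add: sum_distrib_left sum_distrib_right mult.assoc) (rule sum.swap)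
    also have "\<dots> = (\<Sum>k<n. of_real (lam k) * u k i * cnj (u k j))"
      by (rule sum.cong) (use eig that in \<open>auto simp: mat_vec_def\<close>)
    finally show ?thesis .
  qed
  then show ?thesis using on unfolding spectral_decomp_def by blast
qed

definition eigvals :: "nat \<Rightarrow> cmat \<Rightarrow> nat \<Rightarrow> real" where
  "eigvals n A = fst (SOME (lam, v). spectral_decomp n A lam v)"

definition eigvecs :: "nat \<Rightarrow> cmat \<Rightarrow> nat \<Rightarrow> cvec" where
  "eigvecs n A = snd (SOME (lam, v). spectral_decomp n A lam v)"

lemma spectral_decomp_eig:
  assumes "hermitian_mat n A" shows "spectral_decomp n A (eigvals n A) (eigvecs n A)"
proof -
  obtain lam v where "spectral_decomp n A lam v" using spectral_decomp_exists[OF assms] by blast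
  then have "\<exists>p. case p of (lam, v) \<Rightarrow> spectral_decomp n A lam v" by auto
  from someI_ex[OF this] show ?thesis
    unfolding eigvals_def eigvecs_def by (simp split: prod.splits)
qed

lemma mat_fun_eig:
  "mat_fun n f A = (\<lambda>i j. \<Sum>k<n. of_real (f (eigvals n A k)) * eigvecs n A k i * cnj (eigvecs n A k j))"
  unfolding mat_fun_def eigvals_def eigvecs_def by (simp add: case_prod_beta Let_def)

lemma spectral_decomp_cinner:
  "spectral_decomp n A lam v \<Longrightarrow> a < n \<Longrightarrow> b < n \<Longrightarrow> cinner n (v a) (v b) = (if a = b then 1 else 0)"
  unfolding spectral_decomp_def orthonormal_family_def by auto

lemma mat_vec_decomp:
  assumes dec: "\<And>i j. i < n \<Longrightarrow> j < n \<Longrightarrow> A i j = (\<Sum>k\<in>K. of_real (a k) * u k i * cnj (u k j))"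
    and i: "i < n"
  shows "mat_vec n A x i = (\<Sum>k\<in>K. of_real (a k) * u k i * cinner n (u k) x)"
proof -
  have "mat_vec n A x i = (\<Sum>j<n. (\<Sum>k\<in>K. of_real (a k) * u k i * cnj (u k j)) * x j)"
    unfolding mat_vec_def by (rule sum.cong) (simp_all add: dec i)
  also have "\<dots> = (\<Sum>k\<in>K. of_real (a k) * u k i * cinner n (u k) x)"
    unfolding cinner_def sum_distrib_right sum_distrib_left
    by (subst sum.swap) (simp add: mult.assoc)
  finally show ?thesis .
qed

lemma spectral_decomp_mat_vec:
  assumes "spectral_decomp n A lam v" and "i < n"
  shows "mat_vec n A x i = (\<Sum>k<n. of_real (lam k) * v k i * cinner n (v k) x)"
  using assms by (intro mat_vec_decomp) (auto simp: spectral_decomp_def)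

lemma spectral_decomp_eigenvector:
  assumes sp: "spectral_decomp n A lam v" and k: "k < n" and i: "i < n"
  shows "mat_vec n A (v k) i = of_real (lam k) * v k i"
proof -
  have "mat_vec n A (v k) i = (\<Sum>l<n. of_real (lam l) * v l i * cinner n (v l) (v k))"
    by (rule spectral_decomp_mat_vec[OF sp i])
  also have "\<dots> = (\<Sum>l<n. if l = k then of_real (lam l) * v l i else 0)"
    by (rule sum.cong) (auto simp: spectral_decomp_cinner[OF sp] k)
  also have "\<dots> = of_real (lam k) * v k i" using k by (simp add: sum.delta')
  finally show ?thesis .
qed

lemma spectral_decomp_cinner_mat_vec:
  assumes sp: "spectral_decomp n A lam v"
  shows "cinner n x (mat_vec n A x) = (\<Sum>k<n. of_real (lam k) * of_real ((cmod (cinner n (v k) x))\<^sup>2))"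
proof -
  have "cinner n x (mat_vec n A x) = cinner n x (\<lambda>i. \<Sum>k<n. (of_real (lam k) * cinner n (v k) x) * v k i)"
    by (rule cinner_cong) (simp_all add: spectral_decomp_mat_vec[OF sp] mult_ac)
  also have "\<dots> = (\<Sum>k<n. of_real (lam k) * cinner n (v k) x * cinner n x (v k))"
    by (simp add: cinner_sum_right)
  also have "\<dots> = (\<Sum>k<n. of_real (lam k) * of_real ((cmod (cinner n (v k) x))\<^sup>2))"
  proof (rule sum.cong[OF refl])
    fix k
    have "cinner n x (v k) = cnj (cinner n (v k) x)" by (simp only: cinner_cnj)
    then show "of_real (lam k) * cinner n (v k) x * cinner n x (v k)
        = of_real (lam k) * of_real ((cmod (cinner n (v k) x))\<^sup>2)"
      by (simp add: mult_cnj_self mult.assoc)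
  qed
  finally show ?thesis .
qed

lemma spectral_decomp_eigenvalue:
  assumes sp: "spectral_decomp n A lam v" and k: "k < n"
  shows "cinner n (v k) (mat_vec n A (v k)) = of_real (lam k)"
proof -
  have "cinner n (v k) (mat_vec n A (v k)) = cinner n (v k) (\<lambda>i. of_real (lam k) * v k i)"
    by (rule cinner_cong) (simp_all add: spectral_decomp_eigenvector[OF sp k])
  then show ?thesis by (simp add: cinner_scale_right spectral_decomp_cinner[OF sp k k])
qed

lemma mtrace_mmult_mat_fun:
  "mtrace n (mmult n B (mat_fun n f S))
     = (\<Sum>l<n. of_real (f (eigvals n S l)) * cinner n (eigvecs n S l) (mat_vec n B (eigvecs n S l)))"
proof -
  let ?w = "eigvecs n S" and ?b = "eigvals n S"
  have "mtrace n (mmult n B (mat_fun n f S))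
      = (\<Sum>i<n. \<Sum>k<n. \<Sum>l<n. B i k * (of_real (f (?b l)) * ?w l k * cnj (?w l i)))"
    unfolding mtrace_def mmult_def mat_fun_eig sum_distrib_left by simp
  also have "\<dots> = (\<Sum>l<n. \<Sum>i<n. \<Sum>k<n. of_real (f (?b l)) * (cnj (?w l i) * (B i k * ?w l k)))"
    by (subst sum.swap, rule sum.cong[OF refl], subst sum.swap) (simp add: mult_ac)
  also have "\<dots> = (\<Sum>l<n. of_real (f (?b l)) * cinner n (?w l) (mat_vec n B (?w l)))"
    unfolding cinner_def mat_vec_def sum_distrib_left by simp
  finally show ?thesis .
qed

lemma density_eigvals_nonneg:
  assumes "density n A" "k < n" shows "0 \<le> eigvals n A k"
proof -
  have sp: "spectral_decomp n A (eigvals n A) (eigvecs n A)"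
    using spectral_decomp_eig density_hermitian assms(1) by blast
  have "0 \<le> Re (cinner n (eigvecs n A k) (mat_vec n A (eigvecs n A k)))"
    using psd_mat_cinner_nonneg assms(1) unfolding density_def by blast
  then show ?thesis using spectral_decomp_eigenvalue[OF sp assms(2)] by simp
qed

lemma spectral_decomp_mtrace:
  assumes sp: "spectral_decomp n A lam v"
  shows "mtrace n A = of_real (\<Sum>k<n. lam k)"
proof -
  have "mtrace n A = (\<Sum>i<n. \<Sum>k<n. of_real (lam k) * v k i * cnj (v k i))"
    unfolding mtrace_def by (rule sum.cong) (use sp in \<open>auto simp: spectral_decomp_def\<close>)
  also have "\<dots> = (\<Sum>k<n. of_real (lam k) * cinner n (v k) (v k))"
    unfolding cinner_def sum_distrib_left
    by (subst sum.swap) (simp add: mult_ac)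
  also have "\<dots> = (\<Sum>k<n. of_real (lam k))"
    by (rule sum.cong) (simp_all add: spectral_decomp_cinner[OF sp])
  finally show ?thesis by simp
qed

lemma density_eigvals_sum:
  assumes "density n A" shows "(\<Sum>k<n. eigvals n A k) = 1"
proof -
  have sp: "spectral_decomp n A (eigvals n A) (eigvecs n A)"
    using spectral_decomp_eig density_hermitian assms(1) by blast
  have "mtrace n A = 1" using assms unfolding density_def by blast
  then show ?thesis using spectral_decomp_mtrace[OF sp] by (metis of_real_eq_1_iff)
qed

lemma mtrace_mmult_mat_fun_self:
  assumes "hermitian_mat n A"
  shows "mtrace n (mmult n A (mat_fun n f A)) = of_real (\<Sum>l<n. f (eigvals n A l) * eigvals n A l)"
proof -
  have sp: "spectral_decomp n A (eigvals n A) (eigvecs n A)" using spectral_decomp_eig assms by blast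
  show ?thesis unfolding mtrace_mmult_mat_fun
    by (simp add: spectral_decomp_eigenvalue[OF sp])
qed

lemma von_neumann_entropy_eigvals:
  assumes "hermitian_mat n A"
  shows "von_neumann_entropy n A = - (\<Sum>l<n. logs (eigvals n A l) * eigvals n A l)"
  unfolding von_neumann_entropy_def mtrace_mmult_mat_fun_self[OF assms] by simp

lemma von_neumann_entropy_cong:
  assumes eq: "\<And>i j. i < n \<Longrightarrow> j < n \<Longrightarrow> A i j = B i j"
  shows "von_neumann_entropy n A = von_neumann_entropy n B"
proof -
  have "spectral_decomp n A = spectral_decomp n B"
    unfolding spectral_decomp_def using eq by (intro ext) auto
  then have "mat_fun n logs A = mat_fun n logs B" unfolding mat_fun_def by simp
  then have "mtrace n (mmult n A (mat_fun n logs A)) = mtrace n (mmult n B (mat_fun n logs B))"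
    unfolding mtrace_def mmult_def by (intro sum.cong refl) (simp add: eq)
  then show ?thesis unfolding von_neumann_entropy_def by simp
qed

section \<open>Klein's inequality\<close>

lemma log_sum_term_le:
  fixes a b :: real
  assumes "0 \<le> a" "0 \<le> b" "0 < a \<Longrightarrow> 0 < b"
  shows "a - b \<le> a * (logs a - logs b)"
proof (cases "a = 0")
  case True
  then show ?thesis using assms by (simp add: logs_def)
next
  case False
  then have a: "a > 0" and b: "b > 0" using assms by auto
  have "ln (b / a) \<le> b / a - 1" by (rule ln_le_minus_one) (use a b in simp)
  then have "ln b - ln a \<le> b / a - 1" using a b by (simp add: ln_div)
  then have "a * (ln b - ln a) \<le> a * (b / a - 1)" using a by (simp add: mult_left_mono)
  then have "a * ln b - a * ln a \<le> b - a" using a by (simp add: algebra_simps)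
  then show ?thesis using a b by (simp add: logs_def right_diff_distrib)
qed

text \<open>
  The commutative core of Klein's inequality, to be applied to the two spectra a, b and the
  doubly stochastic overlap P k l = |<v k, w l>|^2 of the two eigenbases.
\<close>

lemma doubly_stochastic_log_sum_le:
  fixes a b :: "nat \<Rightarrow> real" and P :: "nat \<Rightarrow> nat \<Rightarrow> real"
  assumes a0: "\<And>k. k < n \<Longrightarrow> 0 \<le> a k" and b0: "\<And>l. l < n \<Longrightarrow> 0 \<le> b l"
    and a1: "(\<Sum>k<n. a k) = 1" and b1: "(\<Sum>l<n. b l) = 1"
    and P0: "\<And>k l. 0 \<le> P k l"
    and Prow: "\<And>k. k < n \<Longrightarrow> (\<Sum>l<n. P k l) = 1" and Pcol: "\<And>l. l < n \<Longrightarrow> (\<Sum>k<n. P k l) = 1"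
    and supp: "\<And>l. l < n \<Longrightarrow> b l = 0 \<Longrightarrow> (\<Sum>k<n. a k * P k l) = 0"
  shows "(\<Sum>l<n. logs (b l) * (\<Sum>k<n. a k * P k l)) \<le> (\<Sum>k<n. logs (a k) * a k)"
proof -
  have pos: "0 < b l" if "k < n" "l < n" "0 < a k" "0 < P k l" for k l
  proof (rule ccontr)
    assume "\<not> 0 < b l"
    then have "b l = 0" using b0[OF that(2)] by linarith
    then have "(\<Sum>k<n. a k * P k l) = 0" by (rule supp[OF that(2)])
    moreover have "\<forall>k\<in>{..<n}. 0 \<le> a k * P k l" using a0 P0 by simp
    ultimately have "a k * P k l = 0" using that(1) sum_nonneg_eq_0_iff[of "{..<n}" "\<lambda>k. a k * P k l"] by simp
    then show False using that(3,4) by simp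
  qed
  have term_le: "P k l * (a k - b l) \<le> P k l * (a k * (logs (a k) - logs (b l)))"
    if k: "k < n" and l: "l < n" for k l
  proof (cases "P k l = 0")
    case False
    then have "0 < P k l" using P0[of k l] by linarith
    then show ?thesis
      by (intro mult_left_mono log_sum_term_le) (use a0 b0 pos k l in auto)
  qed simp
  have "(\<Sum>k<n. \<Sum>l<n. P k l * (a k - b l)) \<le> (\<Sum>k<n. \<Sum>l<n. P k l * (a k * (logs (a k) - logs (b l))))"
    by (intro sum_mono) (rule term_le; simp)
  moreover have "(\<Sum>k<n. \<Sum>l<n. P k l * (a k - b l)) = (\<Sum>k<n. a k) - (\<Sum>l<n. b l)"
  proof -
    have "(\<Sum>k<n. \<Sum>l<n. P k l * (a k - b l))
        = (\<Sum>k<n. a k * (\<Sum>l<n. P k l)) - (\<Sum>l<n. b l * (\<Sum>k<n. P k l))"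
      by (simp add: right_diff_distrib sum_subtractf sum_distrib_left mult_ac) (subst sum.swap, simp)
    then show ?thesis by (simp add: Prow Pcol)
  qed
  moreover have "(\<Sum>k<n. \<Sum>l<n. P k l * (a k * (logs (a k) - logs (b l))))
      = (\<Sum>k<n. logs (a k) * a k) - (\<Sum>l<n. logs (b l) * (\<Sum>k<n. a k * P k l))"
  proof -
    have "(\<Sum>k<n. \<Sum>l<n. P k l * (a k * (logs (a k) - logs (b l))))
       = (\<Sum>k<n. logs (a k) * a k * (\<Sum>l<n. P k l)) - (\<Sum>k<n. \<Sum>l<n. logs (b l) * (a k * P k l))"
      by (simp add: right_diff_distrib sum_subtractf sum_distrib_left mult_ac)
    also have "\<dots> = (\<Sum>k<n. logs (a k) * a k) - (\<Sum>l<n. logs (b l) * (\<Sum>k<n. a k * P k l))"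
      by (simp add: Prow sum_distrib_left) (subst sum.swap, simp)
    finally show ?thesis .
  qed
  ultimately show ?thesis using a1 b1 by linarith
qed

lemma klein_inequality:
  assumes rho: "density n \<rho>" and sig: "density n \<sigma>"
    and supp: "\<And>l. l < n \<Longrightarrow> eigvals n \<sigma> l = 0 \<Longrightarrow>
      Re (cinner n (eigvecs n \<sigma> l) (mat_vec n \<rho> (eigvecs n \<sigma> l))) = 0"
  shows "Re (mtrace n (mmult n \<rho> (mat_fun n logs \<sigma>))) \<le> Re (mtrace n (mmult n \<rho> (mat_fun n logs \<rho>)))"
proof -
  define a where "a = eigvals n \<rho>"
  define v where "v = eigvecs n \<rho>"
  define b where "b = eigvals n \<sigma>"
  define w where "w = eigvecs n \<sigma>"
  have spr: "spectral_decomp n \<rho> a v" unfolding a_def v_def using spectral_decomp_eig density_hermitian rho by blast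
  have sps: "spectral_decomp n \<sigma> b w" unfolding b_def w_def using spectral_decomp_eig density_hermitian sig by blast
  have onv: "orthonormal_family n v" and onw: "orthonormal_family n w"
    using spr sps unfolding spectral_decomp_def by auto
  define P where "P k l = (cmod (cinner n (v k) (w l)))\<^sup>2" for k l
  have Prow: "(\<Sum>l<n. P k l) = 1" if "k < n" for k
  proof -
    have "(\<Sum>l<n. P k l) = (\<Sum>l<n. (cmod (cinner n (w l) (v k)))\<^sup>2)"
      unfolding P_def by (metis cinner_cnj complex_mod_cnj)
    also have "\<dots> = 1" using orthonormal_family_parseval[OF onw] spectral_decomp_cinner[OF spr that that] by simp
    finally show ?thesis .
  qed
  have Pcol: "(\<Sum>k<n. P k l) = 1" if "l < n" for l
    using orthonormal_family_parseval[OF onv] spectral_decomp_cinner[OF sps that that] unfolding P_def by simp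
  have form_w: "Re (cinner n (w l) (mat_vec n \<rho> (w l))) = (\<Sum>k<n. a k * P k l)" for l
    unfolding spectral_decomp_cinner_mat_vec[OF spr] P_def by (simp add: Re_sum)
  have "(\<Sum>l<n. logs (b l) * (\<Sum>k<n. a k * P k l)) \<le> (\<Sum>k<n. logs (a k) * a k)"
  proof (rule doubly_stochastic_log_sum_le[OF _ _ _ _ _ Prow Pcol])
    show "\<And>k. k < n \<Longrightarrow> 0 \<le> a k" "(\<Sum>k<n. a k) = 1"
      unfolding a_def using density_eigvals_nonneg density_eigvals_sum rho by auto
    show "\<And>l. l < n \<Longrightarrow> 0 \<le> b l" "(\<Sum>l<n. b l) = 1"
      unfolding b_def using density_eigvals_nonneg density_eigvals_sum sig by auto
    show "\<And>l. l < n \<Longrightarrow> b l = 0 \<Longrightarrow> (\<Sum>k<n. a k * P k l) = 0"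
      using supp form_w unfolding b_def w_def by metis
  qed (simp add: P_def)
  moreover have "Re (mtrace n (mmult n \<rho> (mat_fun n logs \<sigma>))) = (\<Sum>l<n. logs (b l) * (\<Sum>k<n. a k * P k l))"
    unfolding mtrace_mmult_mat_fun b_def[symmetric] w_def[symmetric] Re_sum
    by (rule sum.cong) (simp_all add: form_w[symmetric])
  moreover have "Re (mtrace n (mmult n \<rho> (mat_fun n logs \<rho>))) = (\<Sum>k<n. logs (a k) * a k)"
    unfolding mtrace_mmult_mat_fun_self[OF density_hermitian[OF rho]] a_def by simp
  ultimately show ?thesis by simp
qed

context
  fixes n :: nat and A :: cmat and K :: "nat set" and a :: "nat \<Rightarrow> real" and u :: "nat \<Rightarrow> cvec"
  assumes herm: "hermitian_mat n A" and fin: "finite K"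
    and orth: "\<And>k k'. k \<in> K \<Longrightarrow> k' \<in> K \<Longrightarrow> cinner n (u k) (u k') = (if k = k' then 1 else 0)"
    and dec: "\<And>i j. i < n \<Longrightarrow> j < n \<Longrightarrow> A i j = (\<Sum>k\<in>K. of_real (a k) * u k i * cnj (u k j))"
begin

lemma decomp_overlap_eigvecs:
  assumes k: "k \<in> K" and l: "l < n" and ne: "cinner n (u k) (eigvecs n A l) \<noteq> 0"
  shows "a k = eigvals n A l"
proof -
  define w where "w = eigvecs n A"
  have sp: "spectral_decomp n A (eigvals n A) w" unfolding w_def using spectral_decomp_eig herm by blast
  have "cinner n (u k) (mat_vec n A (w l)) = cinner n (u k) (\<lambda>i. of_real (eigvals n A l) * w l i)"
    by (rule cinner_cong) (simp_all add: spectral_decomp_eigenvector[OF sp l])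
  then have e1: "cinner n (u k) (mat_vec n A (w l)) = of_real (eigvals n A l) * cinner n (u k) (w l)"
    by (simp add: cinner_scale_right)
  have "cinner n (u k) (mat_vec n A (w l))
      = cinner n (u k) (\<lambda>i. \<Sum>k'\<in>K. (of_real (a k') * cinner n (u k') (w l)) * u k' i)"
    by (rule cinner_cong) (simp_all add: mat_vec_decomp[OF dec] mult_ac)
  also have "\<dots> = (\<Sum>k'\<in>K. if k' = k then of_real (a k') * cinner n (u k') (w l) else 0)"
    unfolding cinner_sum_right by (rule sum.cong) (simp_all add: orth k)
  also have "\<dots> = of_real (a k) * cinner n (u k) (w l)" using k fin by simp
  finally have "of_real (a k) * cinner n (u k) (w l) = of_real (eigvals n A l) * cinner n (u k) (w l)"
    using e1 by (simp only:)
  then show ?thesis using ne unfolding w_def by simp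
qed

lemma von_neumann_entropy_decomp: "von_neumann_entropy n A = - (\<Sum>k\<in>K. logs (a k) * a k)"
proof -
  define b where "b = eigvals n A"
  define w where "w = eigvecs n A"
  have sp: "spectral_decomp n A b w" unfolding b_def w_def using spectral_decomp_eig herm by blast
  have onw: "orthonormal_family n w" using sp unfolding spectral_decomp_def by auto
  define c where "c k l = (cmod (cinner n (u k) (w l)))\<^sup>2" for k l
  define g where "g x = logs x * x" for x :: real
  have eq_ab: "a k = b l" if "k \<in> K" "l < n" "c k l \<noteq> 0" for k l
    using decomp_overlap_eigvecs[OF that(1,2)] that(3) unfolding b_def w_def c_def by simp
  have c_sum: "(\<Sum>k\<in>K. c k l) = 1" if l: "l < n" "b l \<noteq> 0" for l
  proof -
    have "b l = Re (cinner n (w l) (mat_vec n A (w l)))" using spectral_decomp_eigenvalue[OF sp l(1)] by simp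
    also have "cinner n (w l) (mat_vec n A (w l))
        = cinner n (w l) (\<lambda>i. \<Sum>k\<in>K. (of_real (a k) * cinner n (u k) (w l)) * u k i)"
      by (rule cinner_cong) (simp_all add: mat_vec_decomp[OF dec] mult_ac)
    also have "\<dots> = (\<Sum>k\<in>K. of_real (a k) * cinner n (u k) (w l) * cnj (cinner n (u k) (w l)))"
      by (simp add: cinner_sum_right cinner_cnj[of n "u _" "w l", symmetric])
    also have "Re \<dots> = (\<Sum>k\<in>K. a k * c k l)"
      by (simp add: c_def Re_sum mult.assoc mult_cnj_self flip: of_real_power)
    also have "\<dots> = (\<Sum>k\<in>K. b l * c k l)"
      by (rule sum.cong) (auto dest: eq_ab[OF _ l(1)])
    finally show ?thesis using l(2) by (simp flip: sum_distrib_left)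
  qed
  have "von_neumann_entropy n A = - (\<Sum>l<n. g (b l))"
    unfolding von_neumann_entropy_eigvals[OF herm] b_def g_def by simp
  also have "(\<Sum>l<n. g (b l)) = (\<Sum>l<n. \<Sum>k\<in>K. g (b l) * c k l)"
    by (rule sum.cong[OF refl]) (metis c_sum g_def lessThan_iff mult_cancel_left1 mult_zero_right sum_distrib_left)
  also have "\<dots> = (\<Sum>k\<in>K. \<Sum>l<n. g (a k) * c k l)"
    by (subst sum.swap, rule sum.cong[OF refl], rule sum.cong[OF refl]) (auto dest: eq_ab)
  also have "\<dots> = (\<Sum>k\<in>K. g (a k))"
  proof (rule sum.cong[OF refl])
    fix k assume k: "k \<in> K"
    have "(\<Sum>l<n. c k l) = (\<Sum>l<n. (cmod (cinner n (w l) (u k)))\<^sup>2)"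
      unfolding c_def by (metis cinner_cnj complex_mod_cnj)
    also have "\<dots> = 1" using orthonormal_family_parseval[OF onw] orth[OF k k] by simp
    finally show "(\<Sum>l<n. g (a k) * c k l) = g (a k)" by (simp flip: sum_distrib_left)
  qed
  finally show ?thesis by (simp add: g_def)
qed

end

lemma von_neumann_entropy_orthogonal_sum:
  fixes y :: "nat \<Rightarrow> cvec" and a :: "nat \<Rightarrow> real"
  assumes herm: "hermitian_mat p B"
    and yy: "\<And>k l. k < m \<Longrightarrow> l < m \<Longrightarrow> cinner p (y k) (y l) = (if k = l then of_real (a k) else 0)"
    and dec: "\<And>c c'. c < p \<Longrightarrow> c' < p \<Longrightarrow> B c c' = (\<Sum>k<m. y k c * cnj (y k c'))"
  shows "von_neumann_entropy p B = - (\<Sum>k<m. logs (a k) * a k)"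
proof -
  have a0: "0 \<le> a k" if "k < m" for k
    using yy[OF that that] cinner_self_ge0[of p "y k"] by simp
  have y0: "y k c = 0" if "k < m" "a k = 0" "c < p" for k c
    using cinner_self_eq_0D[of p "y k" c] yy[OF that(1) that(1)] that by simp
  define K where "K = {k. k < m \<and> a k \<noteq> 0}"
  have aK: "a k > 0" if "k \<in> K" for k using that a0 unfolding K_def by (auto simp: less_le)
  define u where "u k c = of_real (1 / sqrt (a k)) * y k c" for k c
  have orthu: "cinner p (u k) (u k') = (if k = k' then 1 else 0)" if "k \<in> K" "k' \<in> K" for k k'
  proof -
    have "cinner p (u k) (u k') = of_real (1 / sqrt (a k) * (1 / sqrt (a k'))) * cinner p (y k) (y k')"
      unfolding u_def cinner_scale_left cinner_scale_right by simp
    also have "\<dots> = (if k = k' then 1 else 0)"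
    proof (cases "k = k'")
      case True
      have "1 / sqrt (a k) * (1 / sqrt (a k)) * a k = 1" using aK[OF that(1)] by (simp add: field_simps)
      moreover have "cinner p (y k) (y k) = of_real (a k)" using yy that unfolding K_def by simp
      ultimately show ?thesis using True by (metis of_real_1 of_real_mult)
    qed (use yy that in \<open>simp add: K_def\<close>)
    finally show ?thesis .
  qed
  have "B c c' = (\<Sum>k\<in>K. of_real (a k) * u k c * cnj (u k c'))" if "c < p" "c' < p" for c c'
  proof -
    have "(\<Sum>k\<in>K. of_real (a k) * u k c * cnj (u k c')) = (\<Sum>k\<in>K. y k c * cnj (y k c'))"
    proof (rule sum.cong[OF refl])
      fix k assume "k \<in> K"
      then have "a k > 0" by (rule aK)
      then have "a k * (1 / sqrt (a k)) * (1 / sqrt (a k)) = 1" by (simp add: field_simps)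
      then show "of_real (a k) * u k c * cnj (u k c') = y k c * cnj (y k c')"
        unfolding u_def by (simp add: mult_ac flip: of_real_mult)
    qed
    also have "\<dots> = (\<Sum>k<m. y k c * cnj (y k c'))"
      by (rule sum.mono_neutral_left) (auto simp: K_def y0 that)
    finally show ?thesis using dec[OF that] by simp
  qed
  then have "von_neumann_entropy p B = - (\<Sum>k\<in>K. logs (a k) * a k)"
    by (intro von_neumann_entropy_decomp[OF herm _ orthu]) (simp_all add: K_def)
  also have "(\<Sum>k\<in>K. logs (a k) * a k) = (\<Sum>k<m. logs (a k) * a k)"
    by (rule sum.mono_neutral_left) (auto simp: K_def)
  finally show ?thesis .
qed

text \<open>gram p M is M M^* for the m \<times> p matrix M; its partner gram m (\<lambda>c i. M i c) is M^T conj M.\<close>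

definition gram :: "nat \<Rightarrow> (nat \<Rightarrow> nat \<Rightarrow> complex) \<Rightarrow> cmat" where
  "gram p M = (\<lambda>i j. \<Sum>c<p. M i c * cnj (M j c))"

lemma hermitian_gram: "hermitian_mat m (gram p M)"
  unfolding hermitian_mat_def gram_def by (simp add: mult.commute)

lemma density_gram:
  assumes tr: "(\<Sum>r<m. \<Sum>c<p. (cmod (M r c))\<^sup>2) = 1"
  shows "density m (gram p M)"
  unfolding density_def psd_mat_def
proof (intro conjI allI hermitian_gram)
  fix x :: cvec
  define z where "z c = (\<Sum>i<m. cnj (x i) * M i c)" for c
  have "(\<Sum>i<m. \<Sum>j<m. cnj (x i) * gram p M i j * x j)
      = (\<Sum>i<m. \<Sum>j<m. \<Sum>c<p. cnj (x i) * M i c * (cnj (M j c) * x j))"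
    unfolding gram_def by (intro sum.cong refl) (simp add: sum_distrib_left sum_distrib_right mult_ac)
  also have "\<dots> = (\<Sum>c<p. \<Sum>j<m. \<Sum>i<m. cnj (x i) * M i c * (cnj (M j c) * x j))" by (rule sum_swap3)
  also have "\<dots> = (\<Sum>c<p. z c * cnj (z c))"
    unfolding z_def cnj_sum sum_product by (rule sum.cong[OF refl]) (subst sum.swap, simp add: mult_ac)
  finally have e: "(\<Sum>i<m. \<Sum>j<m. cnj (x i) * gram p M i j * x j) = (\<Sum>c<p. z c * cnj (z c))" .
  show "0 \<le> Re (\<Sum>i<m. \<Sum>j<m. cnj (x i) * gram p M i j * x j)"
    unfolding e Re_sum by (rule sum_nonneg) (simp add: mult_cnj_self)
next
  have "mtrace m (gram p M) = (\<Sum>r<m. \<Sum>c<p. of_real ((cmod (M r c))\<^sup>2))"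
    unfolding mtrace_def gram_def by (intro sum.cong refl) (simp add: mult_cnj_self)
  also have "\<dots> = of_real (\<Sum>r<m. \<Sum>c<p. (cmod (M r c))\<^sup>2)" by (simp only: of_real_sum)
  also have "\<dots> = 1" using tr by simp
  finally show "mtrace m (gram p M) = 1" .
qed

lemma cinner_gram_images:
  "cinner p (\<lambda>c. \<Sum>i<m. M i c * cnj (x i)) (\<lambda>c. \<Sum>i<m. M i c * cnj (y i))
     = cinner m y (mat_vec m (gram p M) x)"
proof -
  have "cinner p (\<lambda>c. \<Sum>i<m. M i c * cnj (x i)) (\<lambda>c. \<Sum>i<m. M i c * cnj (y i))
      = (\<Sum>c<p. \<Sum>i<m. \<Sum>j<m. cnj (y j) * M j c * cnj (M i c) * x i)"
    unfolding cinner_def cnj_sum sum_product by (intro sum.cong refl) (simp add: mult_ac)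
  also have "\<dots> = (\<Sum>j<m. \<Sum>i<m. \<Sum>c<p. cnj (y j) * M j c * cnj (M i c) * x i)"
    by (rule sum_swap3[symmetric])
  also have "\<dots> = cinner m y (mat_vec m (gram p M) x)"
    unfolding cinner_def mat_vec_def gram_def sum_distrib_left sum_distrib_right
    by (intro sum.cong refl) (simp add: mult_ac)
  finally show ?thesis .
qed

lemma gram_transpose_eq_sum:
  assumes on: "orthonormal_family m v" and "c < p" "c' < p"
  shows "gram m (\<lambda>c i. M i c) c c'
     = (\<Sum>k<m. (\<Sum>i<m. M i c * cnj (v k i)) * cnj (\<Sum>i<m. M i c' * cnj (v k i)))"
proof -
  have "(\<Sum>k<m. (\<Sum>i<m. M i c * cnj (v k i)) * cnj (\<Sum>i<m. M i c' * cnj (v k i)))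
      = (\<Sum>k<m. \<Sum>i<m. \<Sum>j<m. M i c * cnj (M j c') * (v k j * cnj (v k i)))"
    unfolding cnj_sum sum_product by (intro sum.cong refl) (simp add: mult_ac)
  also have "\<dots> = (\<Sum>j<m. \<Sum>i<m. \<Sum>k<m. M i c * cnj (M j c') * (v k j * cnj (v k i)))"
    by (rule sum_swap3)
  also have "\<dots> = (\<Sum>j<m. \<Sum>i<m. M i c * cnj (M j c') * (if j = i then 1 else 0))"
    unfolding sum_distrib_left[symmetric]
    by (intro sum.cong refl) (simp add: orthonormal_family_complete[OF on])
  also have "\<dots> = (\<Sum>j<m. M j c * cnj (M j c'))"
    by (rule sum.cong[OF refl]) (simp add: if_distrib sum.delta' cong: if_cong)
  finally show ?thesis unfolding gram_def by simp
qed

text \<open>M M^* and M^T conj M have the same nonzero eigenvalues (Schmidt decomposition).\<close>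

lemma von_neumann_entropy_gram_transpose:
  "von_neumann_entropy m (gram p M) = von_neumann_entropy p (gram m (\<lambda>c i. M i c))"
proof -
  define a where "a = eigvals m (gram p M)"
  define v where "v = eigvecs m (gram p M)"
  have sp: "spectral_decomp m (gram p M) a v"
    unfolding a_def v_def using spectral_decomp_eig hermitian_gram by blast
  have onv: "orthonormal_family m v" using sp unfolding spectral_decomp_def by auto
  define y where "y k c = (\<Sum>i<m. M i c * cnj (v k i))" for k c
  have "von_neumann_entropy p (gram m (\<lambda>c i. M i c)) = - (\<Sum>k<m. logs (a k) * a k)"
  proof (rule von_neumann_entropy_orthogonal_sum[OF hermitian_gram])
    fix k l assume k: "k < m" and l: "l < m"
    have "cinner m (v l) (mat_vec m (gram p M) (v k)) = cinner m (v l) (\<lambda>i. of_real (a k) * v k i)"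
      by (rule cinner_cong) (simp_all add: spectral_decomp_eigenvector[OF sp k])
    then show "cinner p (y k) (y l) = (if k = l then of_real (a k) else 0)"
      using spectral_decomp_cinner[OF sp l k] unfolding y_def cinner_gram_images
      by (simp add: cinner_scale_right)
  next
    fix c c' assume "c < p" "c' < p"
    then show "gram m (\<lambda>c i. M i c) c c' = (\<Sum>k<m. y k c * cnj (y k c'))"
      unfolding y_def by (rule gram_transpose_eq_sum[OF onv])
  qed
  then show ?thesis
    unfolding von_neumann_entropy_eigvals[OF hermitian_gram] a_def by simp
qed

lemma mat_vec_basis: "i < n \<Longrightarrow> mat_vec n A (\<lambda>j. if j = i then 1 else 0) r = A r i"
  unfolding mat_vec_def by (simp add: if_distrib sum.delta cong: if_cong)

lemma cinner_basis_mat_vec: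
  "i < n \<Longrightarrow> cinner n (\<lambda>j. if j = i then 1 else 0) (mat_vec n A (\<lambda>j. if j = i then 1 else 0)) = A i i"
  by (simp add: cinner_basis_left mat_vec_basis)

lemma hermitian_diag_real: assumes "hermitian_mat n A" "a < n" shows "A a a = of_real (Re (A a a))"
proof -
  have "A a a = cnj (A a a)" using hermitian_matD[OF assms(1,2,2)] .
  then have "Im (A a a) = 0" by (metis cnj.simps(2) neg_equal_zero)
  then show ?thesis by (simp add: complex_eq_iff)
qed

lemma psd_diag_nonneg: assumes "psd_mat n A" "a < n" shows "0 \<le> Re (A a a)"
  using psd_mat_cinner_nonneg[OF assms(1)] cinner_basis_mat_vec[OF assms(2)] by metis

lemma density_diag_nonneg: "density n \<rho> \<Longrightarrow> r < n \<Longrightarrow> 0 \<le> Re (\<rho> r r)"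
  using psd_diag_nonneg unfolding density_def by blast

lemma density_mat_vec_eq_0:
  assumes rho: "density n \<rho>" and q: "Re (cinner n x (mat_vec n \<rho> x)) = 0" and i: "i < n"
  shows "mat_vec n \<rho> x i = 0"
proof -
  define a where "a = eigvals n \<rho>"
  define v where "v = eigvecs n \<rho>"
  have sp: "spectral_decomp n \<rho> a v" unfolding a_def v_def using spectral_decomp_eig density_hermitian rho by blast
  have a0: "\<And>k. k < n \<Longrightarrow> 0 \<le> a k" unfolding a_def using density_eigvals_nonneg rho by blast
  have "(\<Sum>k<n. a k * (cmod (cinner n (v k) x))\<^sup>2) = 0"
    using q unfolding spectral_decomp_cinner_mat_vec[OF sp] by (simp add: Re_sum)
  then have "\<forall>k\<in>{..<n}. a k * (cmod (cinner n (v k) x))\<^sup>2 = 0"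
    using sum_nonneg_eq_0_iff[of "{..<n}" "\<lambda>k. a k * (cmod (cinner n (v k) x))\<^sup>2"] a0 by simp
  then have z: "\<And>k. k < n \<Longrightarrow> of_real (a k) * cinner n (v k) x = 0" by auto
  show ?thesis unfolding spectral_decomp_mat_vec[OF sp i]
    by (rule sum.neutral) (use z in \<open>auto simp: mult_ac\<close>)
qed

lemma density_diag_eq_0_row:
  assumes rho: "density n \<rho>" and i: "i < n" and j: "j < n" and z: "\<rho> i i = 0"
  shows "\<rho> i j = 0"
proof -
  have "mat_vec n \<rho> (\<lambda>k. if k = i then 1 else 0) j = 0"
    using density_mat_vec_eq_0[OF rho _ j] cinner_basis_mat_vec[OF i] z by simp
  then have "\<rho> j i = 0" by (simp add: mat_vec_basis[OF i])
  then show ?thesis using hermitian_matD[OF density_hermitian[OF rho] j i] by simp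
qed

lemma supp_le_mat_vec:
  "supp_le n \<rho> \<sigma> \<longleftrightarrow> (\<forall>x. (\<forall>i<n. mat_vec n \<sigma> x i = 0) \<longrightarrow> (\<forall>i<n. mat_vec n \<rho> x i = 0))"
  unfolding supp_le_def mat_vec_def ..

section \<open>Block-diagonal matrices and dephasing\<close>

text \<open>
  On C^dA (x) C^dX the index r corresponds to the pair (r div dX, r mod dX). Dephasing
  (the completely dephasing channel on A) keeps exactly the blocks with equal A-index.
\<close>

definition dephase :: "nat \<Rightarrow> cmat \<Rightarrow> cmat" where
  "dephase dX \<rho> = (\<lambda>r s. if r div dX = s div dX then \<rho> r s else 0)"

definition block_diagonal :: "nat \<Rightarrow> nat \<Rightarrow> cmat \<Rightarrow> bool" where
  "block_diagonal n dX B \<longleftrightarrow> (\<forall>r<n. \<forall>s<n. r div dX \<noteq> s div dX \<longrightarrow> B r s = 0)"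

definition block_restrict :: "nat \<Rightarrow> nat \<Rightarrow> cvec \<Rightarrow> cvec" where
  "block_restrict dX a x = (\<lambda>i. if i div dX = a then x i else 0)"

lemma eigvecs_orthogonal_diagonal:
  assumes herm: "hermitian_mat n S"
    and comm: "\<And>r s. r < n \<Longrightarrow> s < n \<Longrightarrow> S r s * of_real (h s) = of_real (h r) * S r s"
    and l: "l < n" and l': "l' < n" and ne: "eigvals n S l \<noteq> eigvals n S l'"
  shows "cinner n (eigvecs n S l) (\<lambda>i. of_real (h i) * eigvecs n S l' i) = 0"
proof -
  define b where "b = eigvals n S"
  define w where "w = eigvecs n S"
  have sp: "spectral_decomp n S b w" unfolding b_def w_def using spectral_decomp_eig herm by blast
  define Dw where "Dw = (\<lambda>i. of_real (h i) * w l' i)"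
  have "cinner n (w l) (mat_vec n S Dw) = cinner n (mat_vec n S (w l)) Dw"
    by (rule hermitian_cinner_adjoint[OF herm])
  also have "\<dots> = cinner n (\<lambda>i. of_real (b l) * w l i) Dw"
    by (rule cinner_cong) (simp_all add: spectral_decomp_eigenvector[OF sp l])
  finally have e1: "cinner n (w l) (mat_vec n S Dw) = of_real (b l) * cinner n (w l) Dw"
    by (simp add: cinner_scale_left)
  have "mat_vec n S Dw i = of_real (b l') * Dw i" if "i < n" for i
  proof -
    have "mat_vec n S Dw i = (\<Sum>j<n. of_real (h i) * (S i j * w l' j))"
      unfolding mat_vec_def Dw_def
      by (intro sum.cong refl) (metis comm[OF that] lessThan_iff mult.assoc)
    also have "\<dots> = of_real (h i) * mat_vec n S (w l') i" by (simp add: mat_vec_def sum_distrib_left)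
    also have "\<dots> = of_real (b l') * Dw i"
      using spectral_decomp_eigenvector[OF sp l' that] by (simp add: Dw_def)
    finally show ?thesis .
  qed
  then have "cinner n (w l) (mat_vec n S Dw) = cinner n (w l) (\<lambda>i. of_real (b l') * Dw i)"
    by (intro cinner_cong) simp_all
  then have "of_real (b l) * cinner n (w l) Dw = of_real (b l') * cinner n (w l) Dw"
    using e1 by (simp add: cinner_scale_right)
  then show ?thesis using ne unfolding b_def w_def Dw_def by simp
qed

lemma mat_fun_commute_diagonal:
  assumes herm: "hermitian_mat n S"
    and comm: "\<And>r s. r < n \<Longrightarrow> s < n \<Longrightarrow> S r s * of_real (h s) = of_real (h r) * S r s"
    and r: "r < n" and s: "s < n"
  shows "mat_fun n f S r s * of_real (h s) = of_real (h r) * mat_fun n f S r s"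
proof -
  define b where "b = eigvals n S"
  define w where "w = eigvecs n S"
  have on: "orthonormal_family n w"
    using spectral_decomp_eig[OF herm] unfolding spectral_decomp_def w_def by auto
  define D where "D x = (\<lambda>i. of_real (h i) * x i)" for x :: cvec
  define C where "C l l' = cinner n (w l) (D (w l'))" for l l'
  have F: "of_real (f (b l)) * C l l' = of_real (f (b l')) * C l l'" if "l < n" "l' < n" for l l'
    using eigvecs_orthogonal_diagonal[OF herm comm that] unfolding C_def D_def b_def w_def
    by (cases "eigvals n S l = eigvals n S l'") auto
  have Ccnj: "cnj (C l' l) = C l l'" for l l'
    unfolding C_def D_def cinner_def cnj_sum by (rule sum.cong[OF refl]) (simp add: mult_ac)
  have "mat_fun n f S r s * of_real (h s) = (\<Sum>l<n. of_real (f (b l)) * w l r * cnj (D (w l) s))"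
    unfolding mat_fun_eig b_def[symmetric] w_def[symmetric] D_def sum_distrib_right
    by (rule sum.cong[OF refl]) (simp add: mult_ac)
  also have "\<dots> = (\<Sum>l<n. \<Sum>l'<n. of_real (f (b l)) * C l l' * w l r * cnj (w l' s))"
    unfolding orthonormal_family_expand[OF on s, of "D (w _)"] cnj_sum sum_distrib_left C_def[symmetric]
    by (intro sum.cong refl) (simp add: Ccnj mult_ac)
  also have "\<dots> = (\<Sum>l'<n. \<Sum>l<n. of_real (f (b l')) * C l l' * w l r * cnj (w l' s))"
    by (subst sum.swap) (intro sum.cong refl, simp add: F)
  also have "\<dots> = (\<Sum>l'<n. of_real (f (b l')) * D (w l') r * cnj (w l' s))"
    unfolding orthonormal_family_expand[OF on r, of "D (w _)"] sum_distrib_left sum_distrib_right C_def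
    by (intro sum.cong refl) (simp add: mult_ac)
  also have "\<dots> = of_real (h r) * mat_fun n f S r s"
    unfolding mat_fun_eig b_def[symmetric] w_def[symmetric] D_def sum_distrib_left
    by (rule sum.cong[OF refl]) (simp add: mult_ac)
  finally show ?thesis .
qed

lemma block_diagonal_mat_fun:
  assumes herm: "hermitian_mat n S" and bd: "block_diagonal n dX S"
  shows "block_diagonal n dX (mat_fun n f S)"
  unfolding block_diagonal_def
proof (intro allI impI)
  fix r s assume r: "r < n" and s: "s < n" and ne: "r div dX \<noteq> s div dX"
  define h where "h i = (if i div dX = r div dX then 1 else 0 :: real)" for i
  have comm: "S r' s' * of_real (h s') = of_real (h r') * S r' s'" if "r' < n" "s' < n" for r' s'
    using bd that unfolding block_diagonal_def h_def by auto
  have "mat_fun n f S r s * of_real (h s) = of_real (h r) * mat_fun n f S r s"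
    by (rule mat_fun_commute_diagonal[OF herm comm r s])
  then show "mat_fun n f S r s = 0" using ne by (simp add: h_def)
qed

lemma mtrace_mmult_dephase:
  assumes bd: "block_diagonal n dX F"
  shows "mtrace n (mmult n \<rho> F) = mtrace n (mmult n (dephase dX \<rho>) F)"
  unfolding mtrace_def mmult_def
proof (rule sum.cong[OF refl], rule sum.cong[OF refl])
  fix r k assume r: "r \<in> {..<n}" and k: "k \<in> {..<n}"
  show "\<rho> r k * F k r = dephase dX \<rho> r k * F k r"
  proof (cases "r div dX = k div dX")
    case True then show ?thesis by (simp add: dephase_def)
  next
    case False
    then have "F k r = 0" using bd r k unfolding block_diagonal_def by simp
    then show ?thesis by simp
  qed
qed

lemma block_diagonal_dephase: "block_diagonal n dX (dephase dX \<rho>)"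
  unfolding block_diagonal_def dephase_def by auto

lemma mat_vec_block_restrict:
  assumes bd: "block_diagonal n dX B" and r: "r < n"
  shows "mat_vec n B (block_restrict dX a x) r = (if r div dX = a then mat_vec n B x r else 0)"
proof (cases "r div dX = a")
  case True
  show ?thesis unfolding mat_vec_def block_restrict_def using True
    by (auto intro!: sum.cong simp: bd[unfolded block_diagonal_def, rule_format, OF r])
next
  case False
  have "(\<Sum>j<n. B r j * (if j div dX = a then x j else 0)) = 0"
    by (rule sum.neutral) (use False bd r in \<open>auto simp: block_diagonal_def\<close>)
  then show ?thesis using False unfolding mat_vec_def block_restrict_def by simp
qed

lemma mat_vec_dephase_block_restrict:
  "mat_vec n (dephase dX \<rho>) (block_restrict dX a x) r = (if r div dX = a then mat_vec n \<rho> (block_restrict dX a x) r else 0)"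
proof (cases "r div dX = a")
  case True
  then show ?thesis unfolding mat_vec_def block_restrict_def dephase_def by (auto intro!: sum.cong)
next
  case False
  have "(\<Sum>j<n. (if r div dX = j div dX then \<rho> r j else 0) * (if j div dX = a then x j else 0)) = 0"
    by (rule sum.neutral) (use False in auto)
  then show ?thesis using False unfolding mat_vec_def block_restrict_def dephase_def by simp
qed

lemma sum_block_restrict:
  assumes "i < dA * dX" shows "(\<Sum>a<dA. block_restrict dX a x i) = x i"
proof -
  have "i div dX < dA" using assms by (simp add: less_mult_imp_div_less)
  then show ?thesis unfolding block_restrict_def by (simp add: sum.delta)
qed

lemma mat_vec_block_split:
  shows "mat_vec (dA * dX) B x r = (\<Sum>a<dA. mat_vec (dA * dX) B (block_restrict dX a x) r)"
proof -
  have "mat_vec (dA * dX) B x r = mat_vec (dA * dX) B (\<lambda>i. \<Sum>a<dA. block_restrict dX a x i) r"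
    by (subst mat_vec_cong[of "dA * dX" x "\<lambda>i. \<Sum>a<dA. block_restrict dX a x i"]) (simp_all add: sum_block_restrict)
  also have "\<dots> = (\<Sum>a<dA. mat_vec (dA * dX) B (block_restrict dX a x) r)" by (rule mat_vec_sum)
  finally show ?thesis .
qed

lemma cinner_block_restrict_dephase:
  "cinner n (block_restrict dX a x) (mat_vec n \<rho> (block_restrict dX a x))
     = cinner n (block_restrict dX a x) (mat_vec n (dephase dX \<rho>) (block_restrict dX a x))"
  unfolding cinner_def
proof (rule sum.cong[OF refl])
  fix i
  show "cnj (block_restrict dX a x i) * mat_vec n \<rho> (block_restrict dX a x) i
      = cnj (block_restrict dX a x i) * mat_vec n (dephase dX \<rho>) (block_restrict dX a x) i"
    by (cases "i div dX = a") (simp_all add: mat_vec_dephase_block_restrict, simp add: block_restrict_def)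
qed

lemma supp_le_dephase:
  assumes rho: "density (dA * dX) \<rho>"
  shows "supp_le (dA * dX) \<rho> (dephase dX \<rho>)"
  unfolding supp_le_mat_vec
proof (intro allI impI)
  let ?n = "dA * dX"
  fix x i assume ker: "\<forall>i<?n. mat_vec ?n (dephase dX \<rho>) x i = 0" and i: "i < ?n"
  have blk: "mat_vec ?n \<rho> (block_restrict dX a x) i = 0" if "i < ?n" for a i
  proof (rule density_mat_vec_eq_0[OF rho _ that])
    have "mat_vec ?n (dephase dX \<rho>) (block_restrict dX a x) r = 0" if "r < ?n" for r
      using mat_vec_block_restrict[OF block_diagonal_dephase that] ker that by simp
    then show "Re (cinner ?n (block_restrict dX a x) (mat_vec ?n \<rho> (block_restrict dX a x))) = 0"
      unfolding cinner_block_restrict_dephase[of ?n dX a x \<rho>] by (simp add: cinner_zero_right)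
  qed
  show "mat_vec ?n \<rho> x i = 0"
    by (simp add: mat_vec_block_split[of dA dX \<rho> x] blk i)
qed

text \<open>
  If \<rho> is supported in the support of a block-diagonal S, then \<Delta>(\<rho>) vanishes on the
  kernel of S, so S's zero eigenvalues do not contribute to Tr \<Delta>(\<rho>) log S.
\<close>

lemma dephase_kernel_form_eq_0:
  assumes bd: "block_diagonal (dA * dX) dX S" and supp: "supp_le (dA * dX) \<rho> S"
    and w: "\<And>i. i < dA * dX \<Longrightarrow> mat_vec (dA * dX) S w i = 0"
  shows "Re (cinner (dA * dX) w (mat_vec (dA * dX) (dephase dX \<rho>) w)) = 0"
proof -
  let ?n = "dA * dX"
  have rz: "mat_vec ?n \<rho> (block_restrict dX a w) i = 0" if "i < ?n" for a i
  proof -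
    have "\<forall>i<?n. mat_vec ?n S (block_restrict dX a w) i = 0"
      using mat_vec_block_restrict[OF bd] w by simp
    then show ?thesis using supp[unfolded supp_le_mat_vec, rule_format] that by simp
  qed
  have "mat_vec ?n (dephase dX \<rho>) w i = 0" if "i < ?n" for i
    unfolding mat_vec_block_split[of dA dX _ w]
    by (rule sum.neutral) (simp add: mat_vec_dephase_block_restrict that rz)
  then show ?thesis by (simp add: cinner_zero_right)
qed

lemma block_index_less: fixes c a dX dA :: nat shows "c < dX \<Longrightarrow> a < dA \<Longrightarrow> c + a * dX < dA * dX"
proof -
  assume "c < dX" "a < dA"
  then have "c + a * dX < (Suc a) * dX" by simp
  also have "\<dots> \<le> dA * dX" using \<open>a < dA\<close> by (intro mult_right_mono) auto
  finally show ?thesis .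
qed

lemma sum_mult_product_block:
  fixes f :: "nat \<Rightarrow> 'a::comm_monoid_add"
  assumes a: "a < dA" and zero: "\<And>r. r < dA * dX \<Longrightarrow> r div dX \<noteq> a \<Longrightarrow> f r = 0"
  shows "(\<Sum>r<dA * dX. f r) = (\<Sum>c<dX. f (c + a * dX))"
proof -
  have "(\<Sum>r<dA * dX. f r) = (\<Sum>a'<dA. \<Sum>c<dX. f (c + a' * dX))" by (rule sum_mult_product)
  also have "\<dots> = (\<Sum>a'<dA. if a' = a then (\<Sum>c<dX. f (c + a * dX)) else 0)"
    by (intro sum.cong refl) (auto intro!: sum.neutral zero block_index_less)
  also have "\<dots> = (\<Sum>c<dX. f (c + a * dX))" using a by (simp add: sum.delta')
  finally show ?thesis .
qed

lemma form_block_vector: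
  fixes dX :: nat and y :: cvec
  assumes a: "a < dA"
  defines "x \<equiv> (\<lambda>r. if r div dX = a then y (r mod dX) else 0)"
  shows "(\<Sum>r<dA * dX. \<Sum>s<dA * dX. cnj (x r) * A r s * x s)
       = (\<Sum>c<dX. \<Sum>c'<dX. cnj (y c) * A (c + a * dX) (c' + a * dX) * y c')"
proof -
  have "(\<Sum>r<dA * dX. \<Sum>s<dA * dX. cnj (x r) * A r s * x s)
      = (\<Sum>c<dX. \<Sum>s<dA * dX. cnj (x (c + a * dX)) * A (c + a * dX) s * x s)"
    by (rule sum_mult_product_block[OF a]) (simp add: x_def)
  also have "\<dots> = (\<Sum>c<dX. \<Sum>c'<dX. cnj (x (c + a * dX)) * A (c + a * dX) (c' + a * dX) * x (c' + a * dX))"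
    by (intro sum.cong refl sum_mult_product_block[OF a]) (simp add: x_def)
  also have "\<dots> = (\<Sum>c<dX. \<Sum>c'<dX. cnj (y c) * A (c + a * dX) (c' + a * dX) * y c')"
    by (intro sum.cong refl) (simp add: x_def)
  finally show ?thesis .
qed

lemma form_kron_diagonal:
  assumes diag: "\<And>a b. a < dA \<Longrightarrow> b < dA \<Longrightarrow> a \<noteq> b \<Longrightarrow> s a b = 0"
  shows "(\<Sum>r<dA * dX. \<Sum>r'<dA * dX. cnj (x r) * kron dX s t r r' * x r')
     = (\<Sum>a<dA. s a a * (\<Sum>c<dX. \<Sum>c'<dX. cnj (x (c + a * dX)) * t c c' * x (c' + a * dX)))"
proof -
  have "(\<Sum>r<dA * dX. \<Sum>r'<dA * dX. cnj (x r) * kron dX s t r r' * x r')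
      = (\<Sum>a<dA. \<Sum>c<dX. \<Sum>r'<dA * dX. cnj (x (c + a * dX)) * kron dX s t (c + a * dX) r' * x r')"
    by (rule sum_mult_product)
  also have "\<dots> = (\<Sum>a<dA. \<Sum>c<dX. \<Sum>c'<dX.
      cnj (x (c + a * dX)) * kron dX s t (c + a * dX) (c' + a * dX) * x (c' + a * dX))"
  proof (rule sum.cong[OF refl], rule sum.cong[OF refl])
    fix a c assume a: "a \<in> {..<dA}" and c: "c \<in> {..<dX}"
    show "(\<Sum>r'<dA * dX. cnj (x (c + a * dX)) * kron dX s t (c + a * dX) r' * x r')
      = (\<Sum>c'<dX. cnj (x (c + a * dX)) * kron dX s t (c + a * dX) (c' + a * dX) * x (c' + a * dX))"
      using a c diag[of a] by (intro sum_mult_product_block) (auto simp: kron_def less_mult_imp_div_less)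
  qed
  also have "\<dots> = (\<Sum>a<dA. s a a * (\<Sum>c<dX. \<Sum>c'<dX. cnj (x (c + a * dX)) * t c c' * x (c' + a * dX)))"
    unfolding sum_distrib_left by (intro sum.cong refl) (simp add: kron_def mult_ac)
  finally show ?thesis .
qed

lemma incoherent_diag:
  assumes inc: "incoherent dA s" and a: "a < dA"
  shows "s a a = of_real (Re (s a a))" "0 \<le> Re (s a a)"
  using inc a hermitian_diag_real[OF density_hermitian] psd_diag_nonneg
  unfolding incoherent_def density_def by blast+

lemma density_kron:
  assumes inc: "incoherent dA s" and t: "density dX t"
  shows "density (dA * dX) (kron dX s t)"
  unfolding density_def psd_mat_def
proof (intro conjI allI)
  have dX: "0 < dX" using t by (cases "dX = 0") (auto simp: density_def mtrace_def)
  show "hermitian_mat (dA * dX) (kron dX s t)"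
    unfolding hermitian_mat_def kron_def
  proof (intro allI impI)
    fix i j assume "i < dA * dX" "j < dA * dX"
    then have "s (j div dX) (i div dX) = cnj (s (i div dX) (j div dX))"
      using inc unfolding incoherent_def by (intro hermitian_matD density_hermitian) (auto simp: less_mult_imp_div_less)
    moreover have "t (j mod dX) (i mod dX) = cnj (t (i mod dX) (j mod dX))"
      using t dX by (intro hermitian_matD density_hermitian) auto
    ultimately show "s (j div dX) (i div dX) * t (j mod dX) (i mod dX)
        = cnj (s (i div dX) (j div dX) * t (i mod dX) (j mod dX))" by simp
  qed
next
  fix x :: cvec
  let ?q = "\<lambda>a. \<Sum>c<dX. \<Sum>c'<dX. cnj (x (c + a * dX)) * t c c' * x (c' + a * dX)"
  have "Re (\<Sum>a<dA. s a a * ?q a) = (\<Sum>a<dA. Re (s a a * ?q a))" by (rule Re_sum)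
  also have "\<dots> = (\<Sum>a<dA. Re (s a a) * Re (?q a))"
  proof (rule sum.cong[OF refl])
    fix a assume "a \<in> {..<dA}"
    then have e: "s a a = of_real (Re (s a a))" using incoherent_diag(1)[OF inc] by simp
    have "Re (of_real (Re (s a a)) * ?q a) = Re (s a a) * Re (?q a)" by simp
    then show "Re (s a a * ?q a) = Re (s a a) * Re (?q a)" using e by metis
  qed
  also have "\<dots> \<ge> 0"
    using incoherent_diag(2)[OF inc] psd_matD[of dX t] t unfolding density_def
    by (intro sum_nonneg mult_nonneg_nonneg) auto
  finally have "0 \<le> Re (\<Sum>a<dA. s a a * ?q a)" .
  moreover have "(\<Sum>r<dA * dX. \<Sum>r'<dA * dX. cnj (x r) * kron dX s t r r' * x r') = (\<Sum>a<dA. s a a * ?q a)"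
    by (rule form_kron_diagonal) (use inc in \<open>auto simp: incoherent_def\<close>)
  ultimately show "0 \<le> Re (\<Sum>r<dA * dX. \<Sum>r'<dA * dX. cnj (x r) * kron dX s t r r' * x r')"
    by simp
next
  have "mtrace (dA * dX) (kron dX s t) = mtrace dA s * mtrace dX t"
    unfolding mtrace_def kron_def sum_mult_product sum_product by (simp add: sum.swap[of _ "{..<dA}"])
  then show "mtrace (dA * dX) (kron dX s t) = 1"
    using inc t unfolding incoherent_def density_def by simp
qed

lemma density_mixture:
  assumes p0: "\<And>k. k < m \<Longrightarrow> 0 \<le> p k" and p1: "(\<Sum>k<m. p k) = 1"
    and dens: "\<And>k. k < m \<Longrightarrow> density n (\<sigma> k)"
    and eq: "\<And>i j. i < n \<Longrightarrow> j < n \<Longrightarrow> \<rho> i j = (\<Sum>k<m. of_real (p k) * \<sigma> k i j)"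
  shows "density n \<rho>"
  unfolding density_def psd_mat_def
proof (intro conjI allI)
  show "hermitian_mat n \<rho>"
    unfolding hermitian_mat_def
  proof (intro allI impI)
    fix i j assume "i < n" "j < n"
    then show "\<rho> j i = cnj (\<rho> i j)"
      unfolding eq[OF \<open>j < n\<close> \<open>i < n\<close>] eq[OF \<open>i < n\<close> \<open>j < n\<close>] cnj_sum
    proof (intro sum.cong refl)
      fix k assume "k \<in> {..<m}"
      then have "density n (\<sigma> k)" using dens by simp
      then have "\<sigma> k j i = cnj (\<sigma> k i j)"
        using hermitian_matD[OF density_hermitian \<open>i < n\<close> \<open>j < n\<close>] by blast
      then show "of_real (p k) * \<sigma> k j i = cnj (of_real (p k) * \<sigma> k i j)" by simp
    qed
  qed
next
  fix x :: cvec
  have "(\<Sum>i<n. \<Sum>j<n. cnj (x i) * \<rho> i j * x j)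
      = (\<Sum>i<n. \<Sum>j<n. \<Sum>k<m. of_real (p k) * (cnj (x i) * \<sigma> k i j * x j))"
    by (intro sum.cong refl) (simp add: eq sum_distrib_left sum_distrib_right mult_ac)
  also have "\<dots> = (\<Sum>k<m. of_real (p k) * (\<Sum>i<n. \<Sum>j<n. cnj (x i) * \<sigma> k i j * x j))"
    unfolding sum_distrib_left by (subst sum_swap3[symmetric], subst sum.swap) (rule refl)
  also have "Re \<dots> = (\<Sum>k<m. Re (of_real (p k) * (\<Sum>i<n. \<Sum>j<n. cnj (x i) * \<sigma> k i j * x j)))"
    by (rule Re_sum)
  also have "\<dots> \<ge> 0"
  proof (intro sum_nonneg)
    fix k assume "k \<in> {..<m}"
    then have "0 \<le> p k" "psd_mat n (\<sigma> k)" using p0 dens unfolding density_def by auto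
    then show "0 \<le> Re (of_real (p k) * (\<Sum>i<n. \<Sum>j<n. cnj (x i) * \<sigma> k i j * x j))"
      using psd_matD by simp
  qed
  finally show "0 \<le> Re (\<Sum>i<n. \<Sum>j<n. cnj (x i) * \<rho> i j * x j)" .
next
  have "mtrace n \<rho> = (\<Sum>i<n. \<Sum>k<m. of_real (p k) * \<sigma> k i i)"
    unfolding mtrace_def by (rule sum.cong) (simp_all add: eq)
  also have "\<dots> = (\<Sum>k<m. of_real (p k) * mtrace n (\<sigma> k))"
    unfolding mtrace_def sum_distrib_left by (rule sum.swap)
  finally have "mtrace n \<rho> = (\<Sum>k<m. of_real (p k) * mtrace n (\<sigma> k))" .
  then show "mtrace n \<rho> = 1"
    using dens p1 unfolding density_def by (simp flip: of_real_sum)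
qed

lemma IQ_density:
  assumes "\<sigma> \<in> IQ dA dX"
  shows "density (dA * dX) \<sigma>"
proof -
  obtain m :: nat and p :: "nat \<Rightarrow> real" and ss tt :: "nat \<Rightarrow> cmat"
    where p: "\<forall>k<m. 0 \<le> p k" "(\<Sum>k<m. p k) = 1"
    and st: "\<forall>k<m. incoherent dA (ss k) \<and> density dX (tt k)"
    and eq: "\<forall>i<dA * dX. \<forall>j<dA * dX. \<sigma> i j = (\<Sum>k<m. of_real (p k) * kron dX (ss k) (tt k) i j)"
    using assms unfolding IQ_def mem_Collect_eq by blast
  show ?thesis
  proof (rule density_mixture[of m p])
    fix k assume "k < m"
    then show "density (dA * dX) (kron dX (ss k) (tt k))" using st density_kron by blast
  qed (use p eq in simp_all)
qed

lemma IQ_block_diagonal: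
  assumes "\<sigma> \<in> IQ dA dX"
  shows "block_diagonal (dA * dX) dX \<sigma>"
  unfolding block_diagonal_def
proof (intro allI impI)
  fix r s assume r: "r < dA * dX" and s: "s < dA * dX" and ne: "r div dX \<noteq> s div dX"
  obtain m :: nat and p :: "nat \<Rightarrow> real" and ss tt :: "nat \<Rightarrow> cmat"
    where inc: "\<forall>k<m. incoherent dA (ss k) \<and> density dX (tt k)"
    and eq: "\<forall>i<dA * dX. \<forall>j<dA * dX. \<sigma> i j = (\<Sum>k<m. of_real (p k) * kron dX (ss k) (tt k) i j)"
    using assms unfolding IQ_def mem_Collect_eq by blast
  have "\<sigma> r s = (\<Sum>k<m. of_real (p k) * kron dX (ss k) (tt k) r s)" using eq r s by blast
  also have "\<dots> = 0"
  proof (rule sum.neutral, rule ballI)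
    fix k assume "k \<in> {..<m}"
    then have "incoherent dA (ss k)" using inc by blast
    then have "ss k (r div dX) (s div dX) = 0"
      using ne less_mult_imp_div_less[OF r] less_mult_imp_div_less[OF s] unfolding incoherent_def by blast
    then show "of_real (p k) * kron dX (ss k) (tt k) r s = 0" by (simp add: kron_def)
  qed
  finally show "\<sigma> r s = 0" .
qed

lemma density_unit_matrix:
  assumes "a < n" shows "density n (\<lambda>i j. if i = a \<and> j = a then 1 else 0)"
proof -
  have "density n (gram 1 (\<lambda>i _. if i = a then 1 else 0))"
  proof (rule density_gram)
    have "(\<Sum>r<n. \<Sum>c<(1::nat). (cmod (if r = a then 1 else 0))\<^sup>2) = (\<Sum>r<n. if r = a then 1 else 0 :: real)"
      by (intro sum.cong) simp_all
    then show "(\<Sum>r<n. \<Sum>c<(1::nat). (cmod (if r = a then 1 else 0))\<^sup>2) = 1" using assms by simp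
  qed
  moreover have "gram 1 (\<lambda>i _. if i = a then 1 else 0) = (\<lambda>i j. if i = a \<and> j = a then 1 else 0)"
    unfolding gram_def by (intro ext) simp
  ultimately show ?thesis by simp
qed

lemma incoherent_unit_matrix: "a < n \<Longrightarrow> incoherent n (\<lambda>i j. if i = a \<and> j = a then 1 else 0)"
  unfolding incoherent_def using density_unit_matrix by auto

text \<open>
  The weight p_a = Tr <a|\<rho>|a> of the a-th diagonal block and the normalised block
  <a|\<rho>|a> / p_a, replaced by an arbitrary state when p_a = 0.
\<close>

definition block_weight :: "nat \<Rightarrow> cmat \<Rightarrow> nat \<Rightarrow> real" where
  "block_weight dX \<rho> a = (\<Sum>c<dX. Re (\<rho> (c + a * dX) (c + a * dX)))"

definition block_state :: "nat \<Rightarrow> cmat \<Rightarrow> nat \<Rightarrow> cmat" where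
  "block_state dX \<rho> a = (if 0 < block_weight dX \<rho> a
     then (\<lambda>c c'. \<rho> (c + a * dX) (c' + a * dX) / of_real (block_weight dX \<rho> a))
     else (\<lambda>c c'. if c = 0 \<and> c' = 0 then 1 else 0))"

context
  fixes dA dX :: nat and \<rho> :: cmat
  assumes rho: "density (dA * dX) \<rho>"
begin

lemma density_mult_dim_pos: "0 < dX"
  using rho by (cases "dX = 0") (auto simp: density_def mtrace_def)

lemma block_weight_nonneg: "a < dA \<Longrightarrow> 0 \<le> block_weight dX \<rho> a"
  unfolding block_weight_def by (intro sum_nonneg density_diag_nonneg[OF rho] block_index_less) auto

lemma sum_block_weight: "(\<Sum>a<dA. block_weight dX \<rho> a) = 1"
proof -
  have "(\<Sum>a<dA. block_weight dX \<rho> a) = Re (mtrace (dA * dX) \<rho>)"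
    unfolding block_weight_def mtrace_def Re_sum by (rule sum_mult_product[symmetric])
  then show ?thesis using rho unfolding density_def by simp
qed

lemma density_block_state:
  assumes a: "a < dA" shows "density dX (block_state dX \<rho> a)"
proof (cases "0 < block_weight dX \<rho> a")
  case False
  then show ?thesis unfolding block_state_def using density_unit_matrix[OF density_mult_dim_pos] by simp
next
  case True
  let ?w = "block_weight dX \<rho> a"
  let ?T = "\<lambda>c c'. \<rho> (c + a * dX) (c' + a * dX) / of_real ?w"
  have "hermitian_mat dX ?T"
    unfolding hermitian_mat_def
  proof (intro allI impI)
    fix i j assume "i < dX" "j < dX"
    then have "\<rho> (j + a * dX) (i + a * dX) = cnj (\<rho> (i + a * dX) (j + a * dX))"
      using a by (intro hermitian_matD[OF density_hermitian[OF rho]] block_index_less)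
    then show "?T j i = cnj (?T i j)" by simp
  qed
  moreover have "0 \<le> Re (\<Sum>i<dX. \<Sum>j<dX. cnj (y i) * ?T i j * y j)" for y
  proof -
    have "(\<Sum>i<dX. \<Sum>j<dX. cnj (y i) * ?T i j * y j)
        = (\<Sum>i<dX. \<Sum>j<dX. cnj (y i) * \<rho> (i + a * dX) (j + a * dX) * y j) / of_real ?w"
      unfolding sum_divide_distrib by (intro sum.cong refl) simp
    moreover have "0 \<le> Re (\<Sum>i<dX. \<Sum>j<dX. cnj (y i) * \<rho> (i + a * dX) (j + a * dX) * y j)"
      unfolding form_block_vector[OF a, symmetric]
      by (rule psd_matD) (use rho in \<open>simp add: density_def\<close>)
    ultimately show ?thesis using True by (simp add: Re_divide_of_real)
  qed
  moreover have "mtrace dX ?T = 1"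
  proof -
    have "mtrace dX ?T = (\<Sum>c<dX. of_real (Re (\<rho> (c + a * dX) (c + a * dX)))) / of_real ?w"
      unfolding mtrace_def sum_divide_distrib
    proof (intro sum.cong refl)
      fix c assume "c \<in> {..<dX}"
      then have "\<rho> (c + a * dX) (c + a * dX) = of_real (Re (\<rho> (c + a * dX) (c + a * dX)))"
        using a by (intro hermitian_diag_real[OF density_hermitian[OF rho]] block_index_less) auto
      then show "?T c c = of_real (Re (\<rho> (c + a * dX) (c + a * dX))) / of_real ?w" by simp
    qed
    also have "\<dots> = 1" using True by (simp add: block_weight_def flip: of_real_sum)
    finally show ?thesis .
  qed
  ultimately show ?thesis using True unfolding block_state_def density_def psd_mat_def by simp
qed

lemma block_weight_eq_0_entry:
  assumes i: "i < dA * dX" and j: "j < dA * dX" and w0: "block_weight dX \<rho> (i div dX) = 0"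
  shows "\<rho> i j = 0"
proof (rule density_diag_eq_0_row[OF rho i j])
  have ia: "i div dX < dA" using less_mult_imp_div_less[OF i] .
  have "Re (\<rho> (i mod dX + i div dX * dX) (i mod dX + i div dX * dX)) \<le> block_weight dX \<rho> (i div dX)"
    unfolding block_weight_def
    by (rule member_le_sum) (use density_mult_dim_pos ia in \<open>auto intro: density_diag_nonneg[OF rho] block_index_less\<close>)
  then have "Re (\<rho> i i) = 0" using w0 density_diag_nonneg[OF rho i] by simp
  then show "\<rho> i i = 0" using hermitian_diag_real[OF density_hermitian[OF rho] i] by simp
qed

lemma dephase_eq_block_mixture:
  assumes i: "i < dA * dX" and j: "j < dA * dX"
  shows "dephase dX \<rho> i j = (\<Sum>a<dA. of_real (block_weight dX \<rho> a)
     * kron dX (\<lambda>b b'. if b = a \<and> b' = a then 1 else 0) (block_state dX \<rho> a) i j)"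
proof -
  let ?a = "i div dX"
  have "(\<Sum>a<dA. of_real (block_weight dX \<rho> a)
        * kron dX (\<lambda>b b'. if b = a \<and> b' = a then 1 else 0) (block_state dX \<rho> a) i j)
      = (\<Sum>a<dA. if a = ?a then (if ?a = j div dX then of_real (block_weight dX \<rho> a)
           * block_state dX \<rho> a (i mod dX) (j mod dX) else 0) else 0)"
    by (rule sum.cong[OF refl]) (auto simp: kron_def)
  also have "\<dots> = (if ?a = j div dX then of_real (block_weight dX \<rho> ?a)
      * block_state dX \<rho> ?a (i mod dX) (j mod dX) else 0)"
    using less_mult_imp_div_less[OF i] by (simp add: sum.delta')
  also have "\<dots> = dephase dX \<rho> i j"
  proof (cases "?a = j div dX")
    case True
    then have "j mod dX + ?a * dX = j" by (metis mod_div_mult_eq)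
    moreover have "i mod dX + ?a * dX = i" by simp
    ultimately show ?thesis
      using True block_weight_nonneg[OF less_mult_imp_div_less[OF i]] block_weight_eq_0_entry[OF i j]
      by (auto simp: dephase_def block_state_def)
  qed (simp add: dephase_def)
  finally show ?thesis by simp
qed

lemma dephase_in_IQ: "dephase dX \<rho> \<in> IQ dA dX"
  unfolding IQ_def mem_Collect_eq
proof (intro exI conjI)
  show "\<forall>k<dA. 0 \<le> block_weight dX \<rho> k" "(\<Sum>k<dA. block_weight dX \<rho> k) = 1"
    using block_weight_nonneg sum_block_weight by auto
  show "\<forall>k<dA. incoherent dA (\<lambda>b b'. if b = k \<and> b' = k then 1 else 0) \<and> density dX (block_state dX \<rho> k)"
    using incoherent_unit_matrix density_block_state by auto
  show "\<forall>i<dA * dX. \<forall>j<dA * dX. dephase dX \<rho> i j = (\<Sum>k<dA. of_real (block_weight dX \<rho> k)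
      * kron dX (\<lambda>b b'. if b = k \<and> b' = k then 1 else 0) (block_state dX \<rho> k) i j)"
    using dephase_eq_block_mixture by auto
qed

end

section \<open>The relative entropy of coherence\<close>

lemma mtrace_mmult_diff:
  "mtrace n (mmult n \<rho> (\<lambda>i j. F i j - G i j)) = mtrace n (mmult n \<rho> F) - mtrace n (mmult n \<rho> G)"
  unfolding mtrace_def mmult_def by (simp add: right_diff_distrib sum_subtractf)

lemma rel_entropy_supp_le:
  assumes "supp_le n \<rho> \<sigma>"
  shows "rel_entropy n \<rho> \<sigma>
     = ereal (Re (mtrace n (mmult n \<rho> (mat_fun n logs \<rho>))) - Re (mtrace n (mmult n \<rho> (mat_fun n logs \<sigma>))))"
  unfolding rel_entropy_def using assms by (simp add: mtrace_mmult_diff)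

lemma Re_mtrace_mmult_logs_self: "Re (mtrace n (mmult n \<rho> (mat_fun n logs \<rho>))) = - von_neumann_entropy n \<rho>"
  unfolding von_neumann_entropy_def by simp

context
  fixes dA dX :: nat and \<rho> :: cmat
  assumes rho: "density (dA * dX) \<rho>"
begin

lemma rel_entropy_dephase:
  "rel_entropy (dA * dX) \<rho> (dephase dX \<rho>)
     = ereal (von_neumann_entropy (dA * dX) (dephase dX \<rho>) - von_neumann_entropy (dA * dX) \<rho>)"
proof -
  let ?N = "dA * dX" and ?D = "dephase dX \<rho>"
  have "hermitian_mat ?N ?D" using density_hermitian[OF IQ_density[OF dephase_in_IQ[OF rho]]] .
  then have "mtrace ?N (mmult ?N \<rho> (mat_fun ?N logs ?D)) = mtrace ?N (mmult ?N ?D (mat_fun ?N logs ?D))"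
    by (intro mtrace_mmult_dephase block_diagonal_mat_fun block_diagonal_dephase)
  then show ?thesis
    unfolding rel_entropy_supp_le[OF supp_le_dephase[OF rho]] von_neumann_entropy_def by simp
qed

lemma rel_entropy_dephase_le:
  assumes sig: "\<sigma> \<in> IQ dA dX"
  shows "rel_entropy (dA * dX) \<rho> (dephase dX \<rho>) \<le> rel_entropy (dA * dX) \<rho> \<sigma>"
proof (cases "supp_le (dA * dX) \<rho> \<sigma>")
  case False
  then show ?thesis unfolding rel_entropy_def by simp
next
  case True
  let ?N = "dA * dX" and ?D = "dephase dX \<rho>"
  have sd: "density ?N \<sigma>" and sbd: "block_diagonal ?N dX \<sigma>"
    using IQ_density[OF sig] IQ_block_diagonal[OF sig] .
  have sp: "spectral_decomp ?N \<sigma> (eigvals ?N \<sigma>) (eigvecs ?N \<sigma>)"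
    using spectral_decomp_eig[OF density_hermitian[OF sd]] .
  have tr: "mtrace ?N (mmult ?N \<rho> (mat_fun ?N logs \<sigma>)) = mtrace ?N (mmult ?N ?D (mat_fun ?N logs \<sigma>))"
    by (rule mtrace_mmult_dephase[OF block_diagonal_mat_fun[OF density_hermitian[OF sd] sbd]])
  have "Re (mtrace ?N (mmult ?N ?D (mat_fun ?N logs \<sigma>))) \<le> Re (mtrace ?N (mmult ?N ?D (mat_fun ?N logs ?D)))"
  proof (rule klein_inequality[OF IQ_density[OF dephase_in_IQ[OF rho]] sd])
    fix l assume l: "l < ?N" and "eigvals ?N \<sigma> l = 0"
    then show "Re (cinner ?N (eigvecs ?N \<sigma> l) (mat_vec ?N ?D (eigvecs ?N \<sigma> l))) = 0"
      using spectral_decomp_eigenvector[OF sp l] by (intro dephase_kernel_form_eq_0[OF sbd True]) simp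
  qed
  then show ?thesis
    unfolding rel_entropy_dephase rel_entropy_supp_le[OF True] tr Re_mtrace_mmult_logs_self by simp
qed

theorem IQ_coherence_eq_entropy_dephase:
  "IQ_coherence dA dX \<rho>
     = ereal (von_neumann_entropy (dA * dX) (dephase dX \<rho>) - von_neumann_entropy (dA * dX) \<rho>)"
  unfolding IQ_coherence_def rel_entropy_dephase[symmetric]
  by (intro antisym INF_lower dephase_in_IQ[OF rho] INF_greatest rel_entropy_dephase_le)

end

section \<open>Pure tripartite states\<close>

text \<open>
  A pure state \<psi> on C^dA (x) C^dB (x) C^dC, with index (a * dB + b) * dC + c, is read as a
  matrix in two ways: from AB to C (row r = a * dB + b, column c), and from AC to B
  (row r = a * dC + c, column b).
\<close>

lemma ptrace_second_proj: "ptrace_second dC (proj \<psi>) = gram dC (\<lambda>r c. \<psi> (r * dC + c))"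
  unfolding ptrace_second_def proj_def gram_def ..

lemma ptrace_mid_proj:
  "ptrace_mid dB dC (proj \<psi>) = gram dB (\<lambda>r b. \<psi> ((r div dC * dB + b) * dC + r mod dC))"
  unfolding ptrace_mid_def proj_def gram_def ..

lemma ptrace_first_ptrace_second_proj:
  fixes dA dB dC :: nat
  shows "ptrace_first dA dB (ptrace_second dC (proj \<psi>))
     = gram (dA * dC) (\<lambda>b r. \<psi> ((r div dC * dB + b) * dC + r mod dC))"
proof (intro ext)
  fix i j
  show "ptrace_first dA dB (ptrace_second dC (proj \<psi>)) i j
      = gram (dA * dC) (\<lambda>b r. \<psi> ((r div dC * dB + b) * dC + r mod dC)) i j"
    unfolding ptrace_first_def ptrace_second_proj gram_def sum_mult_product[of _ dA dC]
    by (intro sum.cong refl) (simp add: algebra_simps)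
qed

lemma ptrace_first_ptrace_mid_proj:
  fixes dA dB dC :: nat
  assumes "i < dC" "j < dC"
  shows "ptrace_first dA dC (ptrace_mid dB dC (proj \<psi>)) i j = gram (dA * dB) (\<lambda>c r. \<psi> (r * dC + c)) i j"
  unfolding ptrace_first_def ptrace_mid_proj gram_def sum_mult_product[of _ dA dB]
  using assms by (intro sum.cong refl) (simp add: algebra_simps)

lemma sum_cmod_power2_reshape:
  fixes dA dB dC :: nat
  shows "(\<Sum>i<dA * dB * dC. (cmod (\<psi> i))\<^sup>2)
     = (\<Sum>a<dA. \<Sum>b<dB. \<Sum>c<dC. (cmod (\<psi> ((a * dB + b) * dC + c)))\<^sup>2)"
  unfolding sum_mult_product[of _ "dA * dB" dC] sum_mult_product[of _ dA dB]
  by (simp add: algebra_simps)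

lemma density_ptrace_second_proj:
  fixes dA dB dC :: nat
  assumes "(\<Sum>i<dA * dB * dC. (cmod (\<psi> i))\<^sup>2) = 1"
  shows "density (dA * dB) (ptrace_second dC (proj \<psi>))"
  unfolding ptrace_second_proj
proof (rule density_gram)
  have "(\<Sum>r<dA * dB. \<Sum>c<dC. (cmod (\<psi> (r * dC + c)))\<^sup>2) = (\<Sum>i<dA * dB * dC. (cmod (\<psi> i))\<^sup>2)"
    unfolding sum_cmod_power2_reshape sum_mult_product[of _ dA dB] by (simp add: algebra_simps)
  then show "(\<Sum>r<dA * dB. \<Sum>c<dC. (cmod (\<psi> (r * dC + c)))\<^sup>2) = 1" using assms by simp
qed

lemma density_ptrace_mid_proj:
  fixes dA dB dC :: nat
  assumes "(\<Sum>i<dA * dB * dC. (cmod (\<psi> i))\<^sup>2) = 1"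
  shows "density (dA * dC) (ptrace_mid dB dC (proj \<psi>))"
  unfolding ptrace_mid_proj
proof (rule density_gram)
  have "(\<Sum>r<dA * dC. \<Sum>b<dB. (cmod (\<psi> ((r div dC * dB + b) * dC + r mod dC)))\<^sup>2)
      = (\<Sum>a<dA. \<Sum>c<dC. \<Sum>b<dB. (cmod (\<psi> ((a * dB + b) * dC + c)))\<^sup>2)"
    unfolding sum_mult_product[of _ dA dC] by (intro sum.cong refl) simp
  also have "\<dots> = (\<Sum>i<dA * dB * dC. (cmod (\<psi> i))\<^sup>2)"
    unfolding sum_cmod_power2_reshape by (rule sum.cong[OF refl]) (rule sum.swap)
  finally show "(\<Sum>r<dA * dC. \<Sum>b<dB. (cmod (\<psi> ((r div dC * dB + b) * dC + r mod dC)))\<^sup>2) = 1"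
    using assms by simp
qed

text \<open>
  Both dephased states are Gram matrices of the state in which a copy of the A-index is
  handed to the other side: M (a * dB + b) (a' * dC + c) = [a = a'] \<psi> ((a * dB + b) * dC + c).
\<close>

lemma von_neumann_entropy_dephase_ptrace_second_ptrace_mid:
  fixes dA dB dC :: nat
  shows "von_neumann_entropy (dA * dB) (dephase dB (ptrace_second dC (proj \<psi>)))
       = von_neumann_entropy (dA * dC) (dephase dC (ptrace_mid dB dC (proj \<psi>)))"
proof -
  define M where "M r t = (if r div dB = t div dC then \<psi> (r * dC + t mod dC) else 0)" for r t
  have AB: "dephase dB (ptrace_second dC (proj \<psi>)) r s = gram (dA * dC) M r s"
    if r: "r < dA * dB" for r s
  proof -
    have "gram (dA * dC) M r s = (\<Sum>c<dC. M r (c + r div dB * dC) * cnj (M s (c + r div dB * dC)))"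
      unfolding gram_def using less_mult_imp_div_less[OF r]
      by (intro sum_mult_product_block) (auto simp: M_def)
    then show ?thesis
      by (simp add: M_def dephase_def ptrace_second_proj gram_def)
  qed
  have AC: "dephase dC (ptrace_mid dB dC (proj \<psi>)) t u = gram (dA * dB) (\<lambda>t r. M r t) t u"
    if t: "t < dA * dC" for t u
  proof -
    have "gram (dA * dB) (\<lambda>t r. M r t) t u = (\<Sum>b<dB. M (b + t div dC * dB) t * cnj (M (b + t div dC * dB) u))"
      unfolding gram_def using less_mult_imp_div_less[OF t]
      by (intro sum_mult_product_block) (auto simp: M_def)
    then show ?thesis
      by (simp add: M_def dephase_def ptrace_mid_proj gram_def algebra_simps)
  qed
  have "von_neumann_entropy (dA * dB) (dephase dB (ptrace_second dC (proj \<psi>)))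
      = von_neumann_entropy (dA * dB) (gram (dA * dC) M)"
    by (rule von_neumann_entropy_cong) (simp add: AB)
  also have "\<dots> = von_neumann_entropy (dA * dC) (gram (dA * dB) (\<lambda>t r. M r t))"
    by (rule von_neumann_entropy_gram_transpose)
  also have "\<dots> = von_neumann_entropy (dA * dC) (dephase dC (ptrace_mid dB dC (proj \<psi>)))"
    by (rule von_neumann_entropy_cong) (simp add: AC)
  finally show ?thesis .
qed

theorem proposition1:
  fixes dA dB dC :: nat and \<psi> :: cvec
  assumes "(\<Sum>i<dA*dB*dC. (cmod (\<psi> i))\<^sup>2) = 1"
  defines "\<rho>ABC \<equiv> proj \<psi>"
  defines "\<rho>AB \<equiv> ptrace_second dC \<rho>ABC"
  defines "\<rho>AC \<equiv> ptrace_mid dB dC \<rho>ABC"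
  defines "\<rho>B \<equiv> ptrace_first dA dB \<rho>AB"
  defines "\<rho>C \<equiv> ptrace_first dA dC \<rho>AC"
  shows "IQ_coherence dA dB \<rho>AB - IQ_coherence dA dC \<rho>AC
           = ereal (von_neumann_entropy dB \<rho>B - von_neumann_entropy dC \<rho>C)"
proof -
  have "von_neumann_entropy (dA * dB) \<rho>AB = von_neumann_entropy dC (gram (dA * dB) (\<lambda>c r. \<psi> (r * dC + c)))"
    unfolding \<rho>AB_def \<rho>ABC_def ptrace_second_proj by (rule von_neumann_entropy_gram_transpose)
  also have "\<dots> = von_neumann_entropy dC \<rho>C"
    unfolding \<rho>C_def \<rho>AC_def \<rho>ABC_def
    by (intro von_neumann_entropy_cong ptrace_first_ptrace_mid_proj[symmetric])
  finally have AB: "IQ_coherence dA dB \<rho>AB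
      = ereal (von_neumann_entropy (dA * dB) (dephase dB \<rho>AB) - von_neumann_entropy dC \<rho>C)"
    unfolding \<rho>AB_def \<rho>ABC_def IQ_coherence_eq_entropy_dephase[OF density_ptrace_second_proj[OF assms(1)]]
    by simp
  have "von_neumann_entropy (dA * dC) \<rho>AC = von_neumann_entropy dB \<rho>B"
    unfolding \<rho>AC_def \<rho>B_def \<rho>AB_def \<rho>ABC_def ptrace_mid_proj ptrace_first_ptrace_second_proj
    by (rule von_neumann_entropy_gram_transpose)
  then have AC: "IQ_coherence dA dC \<rho>AC
      = ereal (von_neumann_entropy (dA * dC) (dephase dC \<rho>AC) - von_neumann_entropy dB \<rho>B)"
    unfolding \<rho>AC_def \<rho>ABC_def IQ_coherence_eq_entropy_dephase[OF density_ptrace_mid_proj[OF assms(1)]]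
    by simp
  show ?thesis
    unfolding AB AC
    unfolding \<rho>AB_def \<rho>AC_def \<rho>ABC_def von_neumann_entropy_dephase_ptrace_second_ptrace_mid
    by simp
qed

end
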